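(* Let $g\geqslant 1$ be odd. Under the lexicographical monomial ordering with $\alpha >\gamma$, the following set is a Gröbner basis for the ideal $J^+_g$: \[ \left\{\zeta^+_g, \;\; \gamma\zeta^+_{g-2}, \;\; \gamma^2\zeta^+_{g-4}, \;\; \ldots, \;\; \gamma^{(g-1)/2}\zeta^+_{1}, \;\; \gamma^{(g+1)/2}\right\}. \] Consequently, the initial ideal of $J_g^+$ is generated by the monomials $\gamma^i \alpha^{g-2i}$ with $0 \leqslant i \leqslant (g-1)/2$ together with $\gamma^{(g+1)/2}$, and thus a basis for $\mathbb{C}[\alpha,\gamma]/J_g^+$ is represented by the monomials $\gamma^i\alpha^j$ with $0\leqslant i\leqslant (g-1)/2$ and $0\leqslant j\leqslant g-2i-1$ (there are $(g+1)^2/4$ of them). The even index cases are as follows. If $g +1 \equiv 0 \pmod 4$ then $J_{g+1}^+ = J_{g}^+$. If $g + 1 \equiv 2 \pmod 4$, then $\deg J_{g+1}^+ - \deg J_{g}^+ = 1$ and $J_{g}^+ = \left( J_{g+1}^+, \; \gamma^{(g+1)/2}\right)$. Thus a vector space basis for $\mathbb{C}[\alpha,\gamma]/J_{g+1}^+$ when $g + 1 \equiv 2 \pmod 4$ is given by the monomials $\gamma^i\alpha^j$ with $0\leqslant i\leqslant (g-1)/2$ and $0\leqslant j\leqslant g-2i-1$, together with the monomial $\gamma^{(g+1)/2}$.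
   Context: Polynomials $\zeta_k^+\in\mathbb{C}[\alpha,\gamma]$ are defined by $\zeta_k^+=0$ for $k<0$, $\zeta_0^+=1$, and for $k\geqslant 0$: if $k$ is even, $\zeta^+_{k+1} = \alpha \zeta_k^+ + 16 k^2 \zeta_{k-1}^+ + 2k(k-1)\gamma\zeta_{k-2}^+$; if $k$ is odd, $\zeta^+_{k+1} = \alpha \zeta_k^+ + 2k(k-1)\gamma\zeta_{k-2}^+$. (These arise by setting $\beta=8$ in Muñoz's recursion $\zeta_{k+1} = \alpha\zeta_k + k^2(\beta + (-1)^k8)\zeta_{k-1} + 2k(k-1)\gamma\zeta_{k-2}$.) The ideal $J_g^+\subset\mathbb{C}[\alpha,\gamma]$ is $J_g^+=(\zeta_g^+,\zeta_{g+1}^+,\zeta_{g+2}^+)$. For an ideal $J$ with $\mathbb{C}[\alpha,\gamma]/J$ finite dimensional, $\deg J := \dim \mathbb{C}[\alpha,\gamma]/J$. *)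

theory Defs
  imports "HOL-Computational_Algebra.Polynomial"
begin

text \<open>We model the bivariate polynomial ring C[alpha,gamma] as complex poly poly:
  the outer variable is alpha, the coefficients are polynomials in gamma.\<close>

type_synonym bpoly = "complex poly poly"

definition alpha :: bpoly where "alpha = [:0, 1:]"
definition gamma :: bpoly where "gamma = [:[:0, 1:]:]"

definition cst :: "complex \<Rightarrow> bpoly" where "cst c = [:[:c:]:]"

definition mon :: "nat \<times> nat \<Rightarrow> bpoly" where
  "mon e = alpha ^ fst e * gamma ^ snd e"

text \<open>Leading exponent (alpha-exponent, gamma-exponent) w.r.t. lex order with alpha > gamma.\<close>
definition lexp :: "bpoly \<Rightarrow> nat \<times> nat" where
  "lexp p = (degree p, degree (lead_coeff p))"

definition gen_ideal :: "bpoly set \<Rightarrow> bpoly set" where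
  "gen_ideal S = {p. \<exists>F c. finite F \<and> F \<subseteq> S \<and> p = (\<Sum>f\<in>F. c f * f)}"

definition initial_ideal :: "bpoly set \<Rightarrow> bpoly set" where
  "initial_ideal I = gen_ideal {mon (lexp p) | p. p \<in> I \<and> p \<noteq> 0}"

definition is_groebner_basis :: "bpoly set \<Rightarrow> bpoly set \<Rightarrow> bool" where
  "is_groebner_basis G I \<longleftrightarrow> G \<subseteq> I \<and>
     initial_ideal I = gen_ideal {mon (lexp p) | p. p \<in> G \<and> p \<noteq> 0}"

definition spans_mod :: "bpoly set \<Rightarrow> bpoly set \<Rightarrow> bool" where
  "spans_mod J B \<longleftrightarrow> (\<forall>p. \<exists>c. p - (\<Sum>b\<in>B. cst (c b) * b) \<in> J)"

definition basis_mod :: "bpoly set \<Rightarrow> bpoly set \<Rightarrow> bool" where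
  "basis_mod J B \<longleftrightarrow> finite B \<and> spans_mod J B \<and>
     (\<forall>c. (\<Sum>b\<in>B. cst (c b) * b) \<in> J \<longrightarrow> (\<forall>b\<in>B. c b = 0))"

text \<open>deg J = dim of C[alpha,gamma]/J (as the minimal size of a finite spanning set).\<close>
definition qdeg :: "bpoly set \<Rightarrow> nat" where
  "qdeg J = (LEAST n. \<exists>B. finite B \<and> card B = n \<and> spans_mod J B)"

text \<open>zeta^+_k (Munoz recursion with beta = 8).\<close>
fun zeta :: "nat \<Rightarrow> bpoly" where
  "zeta 0 = 1"
| "zeta (Suc 0) = alpha"
| "zeta (Suc (Suc 0)) = alpha * zeta (Suc 0)"
| "zeta (Suc (Suc (Suc k))) =
     alpha * zeta (Suc (Suc k))
     + (if even (Suc (Suc k)) then of_nat (16 * (Suc (Suc k))^2) * zeta (Suc k) else 0)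
     + of_nat (2 * (Suc (Suc k)) * (Suc k)) * gamma * zeta k"

definition Jp :: "nat \<Rightarrow> bpoly set" where
  "Jp g = gen_ideal {zeta g, zeta (g + 1), zeta (g + 2)}"

end

theory Submission
  imports Defs
begin

text \<open>Write \<open>J_odd n\<close> for \<open>J\<^sup>+\<^sub>2\<^sub>n\<^sub>-\<^sub>1\<close> and \<open>J_even n\<close> for \<open>J\<^sup>+\<^sub>2\<^sub>n\<close>, so that \<open>g = 2n - 1\<close>.
  The recursion gives \<open>J_odd (n + 1) \<subseteq> J_even n \<subseteq> J_odd n\<close> and \<open>gamma J_odd n \<subseteq> J_odd (n + 1)\<close>;
  since \<open>zeta\<^sub>2\<^sub>n\<^sub>+\<^sub>1(alpha, 0)\<close> is monic of degree \<open>2n + 1\<close>, every element of \<open>J_odd (n + 1)\<close> is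
  \<open>a zeta\<^sub>2\<^sub>n\<^sub>+\<^sub>1 + gamma r\<close> with \<open>r \<in> J_odd n\<close>. By induction on \<open>n\<close>, every leading term of \<open>J_odd n\<close>
  is then divisible by \<open>gamma\<^sup>n\<close> or by some \<open>gamma\<^sup>k alpha\<^sup>2\<^sup>n\<^sup>-\<^sup>2\<^sup>k\<^sup>-\<^sup>1\<close>, which is the Groebner basis
  statement, and division by \<open>zeta\<^sub>2\<^sub>n\<^sub>+\<^sub>1\<close> with respect to alpha shows that the standard monomials
  span the quotient.

  For the even ideals, the derivation \<open>D = d/d alpha - 16 d/d gamma\<close> maps \<open>J_odd (n + 1)\<close> into
  \<open>J_odd n\<close>. The functionals \<open>p \<mapsto> (D\<^sup>n p)(0, 0)\<close> and
  \<open>p \<mapsto> ((D\<^sup>n\<^sup>-\<^sup>j p)(alpha, 0) / zeta\<^sub>2\<^sub>j\<^sub>-\<^sub>1(alpha, 0))(mu)\<close> for \<open>1 \<le> j \<le> n\<close> and \<open>mu = \<plusminus>8\<i>j\<close>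
  cut out \<open>J_odd (n + 1)\<close> inside \<open>J_odd n\<close>. Their values on \<open>zeta\<^sub>2\<^sub>n\<^sub>-\<^sub>1\<close>, \<open>zeta\<^sub>2\<^sub>n\<close> and \<open>gamma\<^sup>n\<close>
  give \<open>zeta\<^sub>2\<^sub>n\<^sub>-\<^sub>1 \<equiv> t(alpha) zeta\<^sub>2\<^sub>n + c gamma\<^sup>n\<close> modulo \<open>J_odd (n + 1)\<close>, with \<open>c = 0\<close> for even \<open>n\<close>,
  while \<open>gamma\<^sup>n \<notin> J_even n\<close> for odd \<open>n\<close>. So \<open>J_even n = J_odd n\<close> for even \<open>n\<close>, and for odd \<open>n\<close>
  the quotient by \<open>J_even n\<close> has the single extra basis element \<open>gamma\<^sup>n\<close>.\<close>

section \<open>Ideals\<close>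

definition is_ideal :: "'a::comm_ring_1 set \<Rightarrow> bool" where
  "is_ideal I \<longleftrightarrow> 0 \<in> I \<and> (\<forall>x\<in>I. \<forall>y\<in>I. x + y \<in> I) \<and> (\<forall>c. \<forall>x\<in>I. c * x \<in> I)"

lemma is_idealD:
  assumes "is_ideal I"
  shows "0 \<in> I" "x \<in> I \<Longrightarrow> y \<in> I \<Longrightarrow> x + y \<in> I" "x \<in> I \<Longrightarrow> c * x \<in> I"
  using assms unfolding is_ideal_def by auto

lemma is_idealI:
  assumes "0 \<in> I" "\<And>x y. x \<in> I \<Longrightarrow> y \<in> I \<Longrightarrow> x + y \<in> I" "\<And>c x. x \<in> I \<Longrightarrow> c * x \<in> I"
  shows "is_ideal I"
  using assms unfolding is_ideal_def by auto

lemma ideal_mult_right: "is_ideal I \<Longrightarrow> x \<in> I \<Longrightarrow> x * c \<in> I"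
  using is_idealD(3)[of I x c] by (simp add: mult.commute)

lemma ideal_diff: "is_ideal I \<Longrightarrow> x \<in> I \<Longrightarrow> y \<in> I \<Longrightarrow> x - y \<in> I"
  using is_idealD(2)[of I x "- y"] is_idealD(3)[of I y "- 1"] by simp

lemma ideal_sum: "is_ideal I \<Longrightarrow> (\<And>a. a \<in> A \<Longrightarrow> f a \<in> I) \<Longrightarrow> sum f A \<in> I"
  by (induction A rule: infinite_finite_induct) (simp_all add: is_idealD)

lemma ideal_cancel_unit:
  assumes "is_ideal I" "c * d = 1" "d * x \<in> I"
  shows "x \<in> I"
  using is_idealD(3)[OF assms(1,3), of c] assms(2) by (simp add: mult.assoc[symmetric])

lemma gen_ideal_mem: "s \<in> S \<Longrightarrow> s \<in> gen_ideal S"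
  unfolding gen_ideal_def by (intro CollectI exI[of _ "{s}"] exI[of _ "\<lambda>_. 1"]) simp

lemma gen_ideal_induct [consumes 1, case_names zero add mult gen]:
  assumes "x \<in> gen_ideal S"
    and "P 0" "\<And>x y. P x \<Longrightarrow> P y \<Longrightarrow> P (x + y)" "\<And>c x. P x \<Longrightarrow> P (c * x)"
    and "\<And>s. s \<in> S \<Longrightarrow> P s"
  shows "P x"
proof -
  obtain F c where F: "finite F" "F \<subseteq> S" "x = (\<Sum>f\<in>F. c f * f)"
    using assms(1) unfolding gen_ideal_def by blast
  have "P (\<Sum>f\<in>F'. c f * f)" if "F' \<subseteq> F" for F'
    using finite_subset[OF that F(1)] that
  proof (induction F' rule: finite_induct)
    case (insert f F')
    then have "P (c f * f)" using assms(4,5) F(2) by blast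
    then show ?case using insert assms(3) by simp
  qed (simp add: assms(2))
  then show ?thesis using F(3) by blast
qed

lemma gen_ideal_least:
  assumes "is_ideal I" "S \<subseteq> I" shows "gen_ideal S \<subseteq> I"
proof
  fix x assume "x \<in> gen_ideal S"
  then show "x \<in> I"
    by (induction rule: gen_ideal_induct) (use is_idealD[OF assms(1)] assms(2) in auto)
qed

lemma is_ideal_gen_ideal: "is_ideal (gen_ideal S)"
proof (rule is_idealI)
  show "0 \<in> gen_ideal S"
    unfolding gen_ideal_def by (intro CollectI exI[of _ "{}"]) simp
next
  fix x y assume "x \<in> gen_ideal S" "y \<in> gen_ideal S"
  then obtain F c G d where F: "finite F" "F \<subseteq> S" "x = (\<Sum>f\<in>F. c f * f)"
    and G: "finite G" "G \<subseteq> S" "y = (\<Sum>f\<in>G. d f * f)"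
    unfolding gen_ideal_def by blast
  define c' where "c' f = (if f \<in> F then c f else 0)" for f
  define d' where "d' f = (if f \<in> G then d f else 0)" for f
  have "x = (\<Sum>f\<in>F \<union> G. c' f * f)" "y = (\<Sum>f\<in>F \<union> G. d' f * f)"
    unfolding F(3) G(3) c'_def d'_def using F(1) G(1)
    by (auto intro!: sum.mono_neutral_cong_left)
  then have "x + y = (\<Sum>f\<in>F \<union> G. (c' f + d' f) * f)"
    by (simp add: sum.distrib distrib_right)
  then show "x + y \<in> gen_ideal S"
    unfolding gen_ideal_def using F(1,2) G(1,2) by auto
next
  fix a x assume "x \<in> gen_ideal S"
  then obtain F c where F: "finite F" "F \<subseteq> S" "x = (\<Sum>f\<in>F. c f * f)"
    unfolding gen_ideal_def by blast
  then have "a * x = (\<Sum>f\<in>F. (a * c f) * f)" by (simp add: sum_distrib_left mult.assoc)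
  then show "a * x \<in> gen_ideal S"
    unfolding gen_ideal_def using F(1,2) by auto
qed

lemma gen_ideal_mono: "S \<subseteq> T \<Longrightarrow> gen_ideal S \<subseteq> gen_ideal T"
  by (intro gen_ideal_least is_ideal_gen_ideal) (auto intro: gen_ideal_mem)

section \<open>Setting gamma to 0\<close>

lemma map_poly_add_hom:
  assumes "\<And>x y. f (x + y) = f x + f y" "f 0 = 0"
  shows "map_poly f (p + q) = map_poly f p + map_poly f q"
  by (rule poly_eqI) (simp add: coeff_map_poly assms)

lemma map_poly_mult_hom:
  fixes f :: "'a::comm_semiring_1 \<Rightarrow> 'b::comm_semiring_1"
  assumes add: "\<And>x y. f (x + y) = f x + f y" and mult: "\<And>x y. f (x * y) = f x * f y" and "f 0 = 0"
  shows "map_poly f (p * q) = map_poly f p * map_poly f q"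
proof (rule poly_eqI)
  fix n
  have "f (\<Sum>i\<le>n. coeff p i * coeff q (n - i)) = (\<Sum>i\<le>n. f (coeff p i * coeff q (n - i)))"
    using sum_comp_morphism[of f "\<lambda>i. coeff p i * coeff q (n - i)" "{..n}", OF \<open>f 0 = 0\<close> add]
    by (simp add: comp_def)
  then show "coeff (map_poly f (p * q)) n = coeff (map_poly f p * map_poly f q) n"
    by (simp add: coeff_map_poly \<open>f 0 = 0\<close> coeff_mult mult)
qed

lemma alpha_mult: "alpha * p = pCons 0 p"
  by (simp add: alpha_def)

lemma gamma_mult: "gamma * p = smult [:0, 1:] p"
  by (simp add: gamma_def)

lemma gamma_pow_mult: "gamma ^ k * p = smult ([:0, 1:] ^ k) p"
  by (induction k) (simp_all add: gamma_mult mult.assoc)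

lemma cst_mult: "cst c * p = smult [:c:] p"
  by (simp add: cst_def)

lemma gamma_ne_0 [simp]: "gamma \<noteq> 0"
  by (simp add: gamma_def)

lemma cst_0 [simp]: "cst 0 = 0"
  by (simp add: cst_def)

lemma cst_1 [simp]: "cst 1 = 1"
  by (simp add: cst_def one_pCons)

lemma cst_add: "cst (a + b) = cst a + cst b"
  by (simp add: cst_def)

lemma cst_mult_cst: "cst a * cst b = cst (a * b)"
  by (simp add: cst_def)

lemma of_int_bpoly: "(of_int k :: bpoly) = cst (of_int k)"
  by (simp add: cst_def of_int_poly)

lemma ideal_cancel_cst: "is_ideal I \<Longrightarrow> c \<noteq> 0 \<Longrightarrow> cst c * x \<in> I \<Longrightarrow> x \<in> I"
  by (rule ideal_cancel_unit[of I "cst (1 / c)"]) (simp_all add: cst_mult_cst)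

lemma ideal_cancel_int: "is_ideal I \<Longrightarrow> k \<noteq> 0 \<Longrightarrow> of_int k * (x :: bpoly) \<in> I \<Longrightarrow> x \<in> I"
  using ideal_cancel_cst[of I "of_int k" x] by (simp add: of_int_bpoly)

text \<open>\<open>gamma0 p\<close> is \<open>p(alpha, 0)\<close>, \<open>alpha_poly e\<close> is \<open>e(alpha)\<close> and \<open>gamma_quot p\<close> is \<open>(p - p(alpha, 0)) / gamma\<close>.\<close>

definition alpha_poly :: "complex poly \<Rightarrow> bpoly" where
  "alpha_poly e = map_poly (\<lambda>x. [:x:]) e"

definition gamma0 :: "bpoly \<Rightarrow> complex poly" where
  "gamma0 p = map_poly (\<lambda>c. poly c 0) p"

definition gamma_quot :: "bpoly \<Rightarrow> bpoly" where
  "gamma_quot p = map_poly (\<lambda>c. synthetic_div c 0) p"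

lemma coeff_alpha_poly: "coeff (alpha_poly e) n = [:coeff e n:]"
  by (simp add: alpha_poly_def coeff_map_poly)

lemma coeff_gamma0: "coeff (gamma0 p) n = poly (coeff p n) 0"
  by (simp add: gamma0_def coeff_map_poly)

lemma gamma0_decomp: "p = alpha_poly (gamma0 p) + gamma * gamma_quot p"
proof (rule poly_eqI)
  fix n
  have "[:0, 1:] * synthetic_div (coeff p n) 0 + [:poly (coeff p n) 0:] = coeff p n"
    using synthetic_div_correct'[of 0 "coeff p n"] by simp
  then show "coeff p n = coeff (alpha_poly (gamma0 p) + gamma * gamma_quot p) n"
    by (simp add: coeff_alpha_poly coeff_gamma0 gamma_quot_def coeff_map_poly gamma_mult
        mult.commute add.commute)
qed

lemma gamma0_eq_0_imp: "gamma0 p = 0 \<Longrightarrow> p = gamma * gamma_quot p"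
  using gamma0_decomp[of p] by (simp add: alpha_poly_def)

lemma gamma0_add: "gamma0 (p + q) = gamma0 p + gamma0 q"
  unfolding gamma0_def by (rule map_poly_add_hom) simp_all

lemma gamma0_mult: "gamma0 (p * q) = gamma0 p * gamma0 q"
  unfolding gamma0_def by (rule map_poly_mult_hom) simp_all

lemma gamma0_diff: "gamma0 (p - q) = gamma0 p - gamma0 q"
  by (rule poly_eqI) (simp add: coeff_gamma0)

lemma gamma0_0 [simp]: "gamma0 0 = 0"
  by (simp add: gamma0_def)

lemma gamma0_1 [simp]: "gamma0 1 = 1"
  by (simp add: gamma0_def)

lemma gamma0_alpha_poly [simp]: "gamma0 (alpha_poly e) = e"
  by (rule poly_eqI) (simp add: coeff_gamma0 coeff_alpha_poly)

lemma gamma0_alpha [simp]: "gamma0 alpha = [:0, 1:]"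
  by (rule poly_eqI) (simp add: coeff_gamma0 alpha_def coeff_pCons split: nat.splits)

lemma gamma0_gamma [simp]: "gamma0 gamma = 0"
  by (rule poly_eqI) (simp add: coeff_gamma0 gamma_def coeff_pCons split: nat.splits)

lemma gamma0_cst [simp]: "gamma0 (cst c) = [:c:]"
  by (rule poly_eqI) (simp add: coeff_gamma0 cst_def coeff_pCons split: nat.splits)

lemma gamma0_of_int [simp]: "gamma0 (of_int k) = of_int k"
  by (simp add: of_int_bpoly of_int_poly)

lemma gamma0_degree_le: "degree (gamma0 p) \<le> degree p"
  unfolding gamma0_def by (rule map_poly_degree_leq)

lemma gamma0_monic:
  assumes "lead_coeff p = 1"
  shows "degree (gamma0 p) = degree p" "gamma0 p \<noteq> 0"
proof -
  have c: "coeff (gamma0 p) (degree p) = 1" using assms by (simp add: coeff_gamma0)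
  then show "degree (gamma0 p) = degree p"
    using gamma0_degree_le[of p] le_degree[of "gamma0 p" "degree p"] by simp
  show "gamma0 p \<noteq> 0" using c by auto
qed

lemma alpha_poly_mult: "alpha_poly (a * b) = alpha_poly a * alpha_poly b"
  unfolding alpha_poly_def by (rule map_poly_mult_hom) simp_all

lemma alpha_poly_pCons: "alpha_poly (pCons c e) = cst c + alpha * alpha_poly e"
  by (rule poly_eqI) (simp add: coeff_alpha_poly cst_def alpha_mult coeff_pCons split: nat.splits)

lemma alpha_poly_X: "alpha_poly [:0, 1:] = alpha"
  by (rule poly_eqI) (simp add: coeff_alpha_poly alpha_def coeff_pCons split: nat.splits)

section \<open>The polynomials zeta\<close>

text \<open>Integer indices let the recursion be stated uniformly, with \<open>zeta\<^sub>k = 0\<close> for \<open>k < 0\<close>.\<close>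

definition zeta_int :: "int \<Rightarrow> bpoly" where
  "zeta_int k = (if k < 0 then 0 else zeta (nat k))"

lemma zeta_int_neg [simp]: "k < 0 \<Longrightarrow> zeta_int k = 0"
  by (simp add: zeta_int_def)

lemma zeta_int_of_nat [simp]: "zeta_int (int m) = zeta m"
  by (simp add: zeta_int_def)

lemma zeta_int_0 [simp]: "zeta_int 0 = 1"
  by (simp add: zeta_int_def)

lemma zeta_int_1 [simp]: "zeta_int 1 = alpha"
  using zeta_int_of_nat[of 1] by simp

lemma zeta_int_rec:
  assumes "k \<ge> 0"
  shows "zeta_int (k + 1) = alpha * zeta_int k + (if even k then of_int (16 * k^2) * zeta_int (k - 1) else 0)
           + of_int (2 * k * (k - 1)) * gamma * zeta_int (k - 2)"
proof -
  consider "k = 0" | "k = 1" | m where "k = int m + 2"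
    using assms by (metis add.commute le_less not_less zle_iff_zadd int_one_le_iff_zero_less
        zless_imp_add1_zle one_add_one add.left_commute)
  then show ?thesis
  proof cases
    case 3
    have z: "zeta_int (int m + 2 + 1) = zeta (Suc (Suc (Suc m)))" "zeta_int (int m + 2) = zeta (Suc (Suc m))"
      "zeta_int (int m + 2 - 1) = zeta (Suc m)" "zeta_int (int m + 2 - 2) = zeta m"
    proof -
      have "nat (int m + 2 + 1) = Suc (Suc (Suc m))" "nat (int m + 2) = Suc (Suc m)"
        "nat (int m + 2 - 1) = Suc m" "nat (int m + 2 - 2) = m" by simp_all
      then show "zeta_int (int m + 2 + 1) = zeta (Suc (Suc (Suc m)))" "zeta_int (int m + 2) = zeta (Suc (Suc m))"
        "zeta_int (int m + 2 - 1) = zeta (Suc m)" "zeta_int (int m + 2 - 2) = zeta m"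
        unfolding zeta_int_def by simp_all
    qed
    have c: "(of_int (16 * (int m + 2)^2) :: bpoly) = of_nat (16 * (Suc (Suc m))^2)"
      "(of_int (2 * (int m + 2) * (int m + 2 - 1)) :: bpoly) = of_nat (2 * Suc (Suc m) * Suc m)"
      "even (int m + 2) = even (Suc (Suc m))"
      by (simp_all add: algebra_simps)
    show ?thesis unfolding 3 by (simp only: z c zeta.simps(4))
  qed (use zeta_int_of_nat[of 2] in \<open>simp_all add: numeral_2_eq_2\<close>)
qed

lemma zeta_int_rec_even:
  "k \<ge> 0 \<Longrightarrow> even k \<Longrightarrow> zeta_int (k + 1) =
     alpha * zeta_int k + of_int (16 * k^2) * zeta_int (k - 1) + of_int (2 * k * (k - 1)) * gamma * zeta_int (k - 2)"
  using zeta_int_rec[of k] by simp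

lemma zeta_int_rec_odd:
  "k \<ge> 0 \<Longrightarrow> odd k \<Longrightarrow> zeta_int (k + 1) = alpha * zeta_int k + of_int (2 * k * (k - 1)) * gamma * zeta_int (k - 2)"
  using zeta_int_rec[of k] by simp

lemma zeta_rec_2n2:
  "zeta_int (2 * int n + 2) = alpha * zeta_int (2 * int n + 1)
    + of_int (2 * (2 * int n + 1) * (2 * int n)) * gamma * zeta_int (2 * int n - 1)"
proof -
  have e: "2 * int n + 1 + 1 = 2 * int n + 2" "2 * int n + 1 - 1 = 2 * int n" "2 * int n + 1 - 2 = 2 * int n - 1"
    by simp_all
  show ?thesis using zeta_int_rec_odd[of "2 * int n + 1", unfolded e] by simp
qed

lemma zeta_rec_2n3:
  "zeta_int (2 * int n + 3) = alpha * zeta_int (2 * int n + 2) + of_int (16 * (2 * int n + 2)^2) * zeta_int (2 * int n + 1)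
    + of_int (2 * (2 * int n + 2) * (2 * int n + 1)) * gamma * zeta_int (2 * int n)"
proof -
  have e: "2 * int n + 2 + 1 = 2 * int n + 3" "2 * int n + 2 - 1 = 2 * int n + 1" "2 * int n + 2 - 2 = 2 * int n"
    by simp_all
  show ?thesis using zeta_int_rec_even[of "2 * int n + 2", unfolded e] by simp
qed

lemma zeta_monic: "degree (zeta m) = m \<and> lead_coeff (zeta m) = 1"
proof (induction m rule: less_induct)
  case (less m)
  consider "m = 0" | "m = 1" | "m = 2" | k where "m = Suc (Suc (Suc k))"
    by (metis One_nat_def Suc_1 not0_implies_Suc)
  then show ?case
  proof cases
    case 4
    let ?A = "alpha * zeta (Suc (Suc k))"
    let ?X = "(if even (Suc (Suc k)) then of_nat (16 * (Suc (Suc k))^2) * zeta (Suc k) else 0) :: bpoly"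
    let ?Y = "of_nat (2 * (Suc (Suc k)) * (Suc k)) * gamma * zeta k :: bpoly"
    have IH: "degree (zeta j) = j" "lead_coeff (zeta j) = 1" if "j < m" for j
      using less.IH[OF that] by blast+
    have A: "degree ?A = m" "lead_coeff ?A = 1"
      using IH[of "Suc (Suc k)"] 4 by (auto simp: alpha_mult)
    have c: "degree (of_nat c * p :: bpoly) \<le> degree p" "degree (of_nat c * gamma * p :: bpoly) \<le> degree p"
      for c p
      using degree_mult_le[of "of_nat c :: bpoly" p] degree_mult_le[of "of_nat c * gamma :: bpoly" p]
        degree_mult_le[of "of_nat c :: bpoly" gamma] by (simp_all add: gamma_def)
    have "degree ?X \<le> Suc k"
    proof (cases "even (Suc (Suc k))")
      case True
      then have "degree ?X = degree (of_nat (16 * (Suc (Suc k))^2) * zeta (Suc k) :: bpoly)"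
        by (simp only: if_True)
      also have "\<dots> \<le> degree (zeta (Suc k))" by (rule c(1))
      finally show ?thesis using IH(1)[of "Suc k"] 4 by simp
    qed simp
    moreover have "degree ?Y \<le> degree (zeta k)" by (rule c(2))
    ultimately have lt: "degree (?X + ?Y) < degree ?A"
      using A degree_add_le_max[of ?X ?Y] IH(1)[of k] 4 by simp
    have "zeta m = (?X + ?Y) + ?A" unfolding 4 by (simp only: zeta.simps(4) add.commute add.left_commute)
    then show ?thesis
      using degree_add_eq_right[OF lt] lead_coeff_add_le[OF lt] A by metis
  qed (simp_all add: numeral_2_eq_2 alpha_mult alpha_def)
qed

lemma zeta_int_monic:
  assumes "k \<ge> 0" shows "degree (zeta_int k) = nat k" "lead_coeff (zeta_int k) = 1"
  using zeta_monic[of "nat k"] assms unfolding zeta_int_def by auto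

section \<open>The ideals J_(2n-1)\<close>

definition J_odd :: "nat \<Rightarrow> bpoly set" where
  "J_odd n = gen_ideal {zeta_int (2 * int n - 1), zeta_int (2 * int n), zeta_int (2 * int n + 1)}"

lemma is_ideal_J_odd: "is_ideal (J_odd n)"
  unfolding J_odd_def by (rule is_ideal_gen_ideal)

lemma J_odd_add: "x \<in> J_odd n \<Longrightarrow> y \<in> J_odd n \<Longrightarrow> x + y \<in> J_odd n"
  and J_odd_mult: "x \<in> J_odd n \<Longrightarrow> c * x \<in> J_odd n"
  and J_odd_mult_right: "x \<in> J_odd n \<Longrightarrow> x * c \<in> J_odd n"
  and J_odd_diff: "x \<in> J_odd n \<Longrightarrow> y \<in> J_odd n \<Longrightarrow> x - y \<in> J_odd n"
  and J_odd_zero: "0 \<in> J_odd n"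
  by (rule is_idealD[OF is_ideal_J_odd] ideal_mult_right[OF is_ideal_J_odd] ideal_diff[OF is_ideal_J_odd];
      assumption)+

lemma J_odd_Suc: "J_odd (Suc n) = gen_ideal {zeta_int (2 * int n + 1), zeta_int (2 * int n + 2), zeta_int (2 * int n + 3)}"
proof -
  have "2 * int (Suc n) - 1 = 2 * int n + 1" "2 * int (Suc n) = 2 * int n + 2" "2 * int (Suc n) + 1 = 2 * int n + 3"
    by simp_all
  then show ?thesis unfolding J_odd_def by (simp only:)
qed

lemma zeta_in_J_odd:
  "zeta_int (2 * int n - 1) \<in> J_odd n" "zeta_int (2 * int n) \<in> J_odd n" "zeta_int (2 * int n + 1) \<in> J_odd n"
  "zeta_int (2 * int n + 2) \<in> J_odd n" "zeta_int (2 * int n + 3) \<in> J_odd n"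
proof -
  show g: "zeta_int (2 * int n - 1) \<in> J_odd n" "zeta_int (2 * int n) \<in> J_odd n"
    "zeta_int (2 * int n + 1) \<in> J_odd n"
    unfolding J_odd_def by (auto intro: gen_ideal_mem)
  then show z2: "zeta_int (2 * int n + 2) \<in> J_odd n"
    unfolding zeta_rec_2n2 by (intro J_odd_add J_odd_mult)
  show "zeta_int (2 * int n + 3) \<in> J_odd n"
    unfolding zeta_rec_2n3 using g z2 by (intro J_odd_add J_odd_mult)
qed

lemma zeta_in_J_odd_Suc:
  "zeta_int (2 * int n + 1) \<in> J_odd (Suc n)" "zeta_int (2 * int n + 2) \<in> J_odd (Suc n)"
  "zeta_int (2 * int n + 3) \<in> J_odd (Suc n)"
  unfolding J_odd_Suc by (auto intro: gen_ideal_mem)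

lemma zeta_2n3_in_J_odd: "zeta_int (2 * int n + 3) \<in> J_odd (Suc (Suc n))"
proof -
  have e: "2 * int (Suc n) + 1 = 2 * int n + 3" by simp
  show ?thesis using zeta_in_J_odd_Suc(1)[of "Suc n", unfolded e] .
qed

lemma J_odd_0: "J_odd 0 = UNIV"
proof -
  have "x * zeta_int (2 * int 0) \<in> J_odd 0" for x using zeta_in_J_odd(2) by (rule J_odd_mult)
  then show ?thesis by auto
qed

text \<open>The two steps of the recursion following \<open>zeta\<^sub>2\<^sub>n\<^sub>+\<^sub>1\<close> express \<open>gamma zeta\<^sub>2\<^sub>n\<^sub>-\<^sub>1\<close> and \<open>gamma zeta\<^sub>2\<^sub>n\<close>
  through the generators of \<open>J_odd (Suc n)\<close>.\<close>

lemma gamma_mult_J_odd: "x \<in> J_odd n \<Longrightarrow> gamma * x \<in> J_odd (Suc n)"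
  unfolding J_odd_def[of n]
proof (induction rule: gen_ideal_induct)
  case (gen s)
  have "gamma * zeta_int (2 * int n + 1) \<in> J_odd (Suc n)"
    using zeta_in_J_odd_Suc(1) by (rule J_odd_mult)
  moreover have "gamma * zeta_int (2 * int n) \<in> J_odd (Suc n)"
  proof -
    have "of_int (2 * (2 * int n + 2) * (2 * int n + 1)) * (gamma * zeta_int (2 * int n))
        = zeta_int (2 * int n + 3) - alpha * zeta_int (2 * int n + 2)
          - of_int (16 * (2 * int n + 2)^2) * zeta_int (2 * int n + 1)"
      unfolding zeta_rec_2n3 by (simp add: algebra_simps)
    also have "\<dots> \<in> J_odd (Suc n)" using zeta_in_J_odd_Suc by (intro J_odd_diff J_odd_mult)
    finally show ?thesis by (rule ideal_cancel_int[OF is_ideal_J_odd, rotated]) simp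
  qed
  moreover have "gamma * zeta_int (2 * int n - 1) \<in> J_odd (Suc n)"
  proof (cases "n = 0")
    case False
    have "of_int (2 * (2 * int n + 1) * (2 * int n)) * (gamma * zeta_int (2 * int n - 1))
        = zeta_int (2 * int n + 2) - alpha * zeta_int (2 * int n + 1)"
      unfolding zeta_rec_2n2 by (simp add: algebra_simps)
    also have "\<dots> \<in> J_odd (Suc n)" using zeta_in_J_odd_Suc by (intro J_odd_diff J_odd_mult)
    finally show ?thesis by (rule ideal_cancel_int[OF is_ideal_J_odd, rotated]) (use False in simp)
  qed (simp add: J_odd_zero)
  ultimately show ?case using gen by blast
next
  case zero show ?case by (simp add: J_odd_zero)
next
  case (add x y) then show ?case by (simp add: distrib_left J_odd_add)
next
  case (mult c x) then show ?case by (metis J_odd_mult mult.left_commute)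
qed

lemma gamma_pow_mult_J_odd: "x \<in> J_odd n \<Longrightarrow> gamma ^ k * x \<in> J_odd (n + k)"
  by (induction k) (simp_all add: gamma_mult_J_odd mult.assoc)

lemma gamma_pow_in_J_odd: "gamma ^ n \<in> J_odd n"
  using gamma_pow_mult_J_odd[of 1 0 n] by (simp add: J_odd_0)

lemma gamma_pow_zeta_in_J_odd: "gamma ^ k * zeta_int (2 * int m - 1) \<in> J_odd (m + k)"
  using gamma_pow_mult_J_odd[OF zeta_in_J_odd(1)] .

lemma J_odd_Suc_decomp:
  assumes "x \<in> J_odd (Suc n)"
  obtains a r where "r \<in> J_odd n" "x = a * zeta_int (2 * int n + 1) + gamma * r"
proof -
  let ?z = "zeta_int (2 * int n + 1)"
  let ?P = "\<lambda>x. \<exists>a r. r \<in> J_odd n \<and> x = a * ?z + gamma * r"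
  have z2: "zeta_int (2 * int n + 2) = alpha * ?z
      + gamma * (of_int (2 * (2 * int n + 1) * (2 * int n)) * zeta_int (2 * int n - 1))"
    unfolding zeta_rec_2n2 by (simp add: algebra_simps)
  have "?P x" using assms unfolding J_odd_Suc
  proof (induction rule: gen_ideal_induct)
    case zero show ?case using J_odd_zero by (intro exI[of _ 0]) auto
  next
    case (add x y)
    then obtain a r b s where "r \<in> J_odd n" "x = a * ?z + gamma * r" "s \<in> J_odd n" "y = b * ?z + gamma * s"
      by blast
    then show ?case
      by (intro exI[of _ "a + b"] exI[of _ "r + s"]) (simp add: J_odd_add algebra_simps)
  next
    case (mult c x)
    then obtain a r where "r \<in> J_odd n" "x = a * ?z + gamma * r" by blast
    then show ?case
      by (intro exI[of _ "c * a"] exI[of _ "c * r"]) (simp add: J_odd_mult algebra_simps)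
  next
    case (gen s)
    have "?P ?z" using J_odd_zero by (intro exI[of _ 1] exI[of _ 0]) simp
    moreover have "?P (zeta_int (2 * int n + 2))"
      unfolding z2 using zeta_in_J_odd(1) by (blast intro: J_odd_mult)
    moreover have "?P (zeta_int (2 * int n + 3))"
    proof -
      have "zeta_int (2 * int n + 3) = (alpha * alpha + of_int (16 * (2 * int n + 2)^2)) * ?z
          + gamma * (alpha * (of_int (2 * (2 * int n + 1) * (2 * int n)) * zeta_int (2 * int n - 1))
                     + of_int (2 * (2 * int n + 2) * (2 * int n + 1)) * zeta_int (2 * int n))"
        unfolding zeta_rec_2n3 z2 by (simp add: algebra_simps)
      then show ?thesis using zeta_in_J_odd(1,2) by (blast intro: J_odd_add J_odd_mult)
    qed
    ultimately show ?case using gen by blast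
  qed
  then show thesis using that by blast
qed

lemma gamma0_zeta_odd:
  "gamma0 (zeta_int (2 * int n + 1)) \<noteq> 0" "degree (gamma0 (zeta_int (2 * int n + 1))) = 2 * n + 1"
  using gamma0_monic[OF zeta_int_monic(2)] zeta_int_monic(1)[of "2 * int n + 1"] by (simp_all add: nat_add_distrib)

text \<open>Since \<open>zeta\<^sub>2\<^sub>n\<^sub>+\<^sub>1(alpha, 0) \<noteq> 0\<close>, a multiple \<open>a zeta\<^sub>2\<^sub>n\<^sub>+\<^sub>1\<close> divisible by gamma has \<open>a\<close> divisible by gamma.\<close>

lemma J_odd_Suc_gamma_cancel:
  assumes "gamma * q \<in> J_odd (Suc n)" shows "q \<in> J_odd n"
proof -
  obtain a r where r: "r \<in> J_odd n" "gamma * q = a * zeta_int (2 * int n + 1) + gamma * r"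
    using J_odd_Suc_decomp[OF assms] .
  have "gamma0 a = 0"
    using arg_cong[OF r(2), of gamma0] gamma0_zeta_odd(1)[of n] by (simp add: gamma0_add gamma0_mult)
  then have "gamma * q = gamma * (gamma_quot a * zeta_int (2 * int n + 1) + r)"
    using r(2) gamma0_eq_0_imp[of a] by (metis distrib_left mult.assoc)
  then show ?thesis using r(1) zeta_in_J_odd(3) by (simp add: J_odd_add J_odd_mult)
qed

text \<open>Here \<open>p(alpha, 0)\<close> is a multiple of \<open>zeta\<^sub>2\<^sub>n\<^sub>+\<^sub>1(alpha, 0)\<close>, whose degree \<open>2n + 1\<close> is too large.\<close>

lemma J_odd_Suc_low_degree:
  assumes "p \<in> J_odd (Suc n)" "degree p < 2 * n + 1"
  shows "p = gamma * gamma_quot p" "gamma_quot p \<in> J_odd n"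
proof -
  obtain a r where r: "r \<in> J_odd n" "p = a * zeta_int (2 * int n + 1) + gamma * r"
    using J_odd_Suc_decomp[OF assms(1)] .
  have ep: "gamma0 p = gamma0 a * gamma0 (zeta_int (2 * int n + 1))"
    using r(2) by (simp add: gamma0_add gamma0_mult)
  have "gamma0 a = 0"
  proof (rule ccontr)
    assume "gamma0 a \<noteq> 0"
    then have "degree (gamma0 p) = degree (gamma0 a) + (2 * n + 1)"
      using ep gamma0_zeta_odd[of n] by (simp add: degree_mult_eq)
    then show False using gamma0_degree_le[of p] assms(2) by simp
  qed
  then have a: "a = gamma * gamma_quot a" by (rule gamma0_eq_0_imp)
  show p: "p = gamma * gamma_quot p" using ep \<open>gamma0 a = 0\<close> gamma0_eq_0_imp by simp
  have "gamma * gamma_quot p = gamma * (gamma_quot a * zeta_int (2 * int n + 1) + r)"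
    using r(2) a p by (metis distrib_left mult.assoc)
  then show "gamma_quot p \<in> J_odd n"
    using r(1) zeta_in_J_odd(3) by (simp add: J_odd_add J_odd_mult)
qed

lemma lead_term_J_odd:
  assumes "p \<in> J_odd n" "p \<noteq> 0"
  shows "n \<le> degree (lead_coeff p) \<or> (\<exists>k<n. 2 * n \<le> degree p + 2 * k + 1 \<and> k \<le> degree (lead_coeff p))"
  using assms
proof (induction n arbitrary: p)
  case (Suc n)
  show ?case
  proof (cases "2 * n + 1 \<le> degree p")
    case False
    then have p: "p = gamma * gamma_quot p" and q: "gamma_quot p \<in> J_odd n"
      using J_odd_Suc_low_degree[OF Suc.prems(1)] by simp_all
    have q0: "gamma_quot p \<noteq> 0" using Suc.prems(2) p by auto
    have "degree p = degree (gamma_quot p)"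
      and d: "degree (lead_coeff p) = Suc (degree (lead_coeff (gamma_quot p)))"
      using q0 arg_cong[OF p, of degree] arg_cong[OF p, of "\<lambda>p. degree (lead_coeff p)"]
      by (simp_all add: gamma_mult lead_coeff_smult degree_mult_eq)
    then have "n \<le> degree (lead_coeff (gamma_quot p))
        \<or> (\<exists>k<n. 2 * n \<le> degree p + 2 * k + 1 \<and> k \<le> degree (lead_coeff (gamma_quot p)))"
      using Suc.IH[OF q q0] by simp
    then show ?thesis
    proof (elim disjE exE conjE)
      fix k assume "k < n" "2 * n \<le> degree p + 2 * k + 1" "k \<le> degree (lead_coeff (gamma_quot p))"
      then show ?thesis using d by (intro disjI2 exI[of _ "Suc k"]) auto
    qed (simp add: d)
  qed (auto intro!: exI[of _ 0])
qed simp

definition std_exps :: "nat \<Rightarrow> (nat \<times> nat) set" where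
  "std_exps n = {(j, i). i < n \<and> j + 2 * i + 1 < 2 * n}"

definition supported_on :: "(nat \<times> nat) set \<Rightarrow> bpoly \<Rightarrow> bool" where
  "supported_on E v \<longleftrightarrow> (\<forall>j i. coeff (coeff v j) i \<noteq> 0 \<longrightarrow> (j, i) \<in> E)"

lemma finite_std_exps: "finite (std_exps n)"
  by (rule finite_subset[of _ "{..<2 * n} \<times> {..<n}"]) (auto simp: std_exps_def)

lemma card_std_exps: "card (std_exps n) = n ^ 2"
proof -
  have "std_exps n = (\<lambda>(i, j). (j, i)) ` (SIGMA i:{..<n}. {..<2 * n - 1 - 2 * i})"
    by (auto simp: std_exps_def image_iff)
  then have "card (std_exps n) = (\<Sum>i<n. 2 * n - 1 - 2 * i)"
    by (simp add: card_image inj_on_def card_SigmaI)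
  also have "\<dots> = n ^ 2"
  proof (induction n)
    case (Suc n)
    have "(\<Sum>i<n. 2 * Suc n - 1 - 2 * i) = (\<Sum>i<n. (2 * n - 1 - 2 * i) + 2)"
      by (rule sum.cong) auto
    also have "\<dots> = (\<Sum>i<n. 2 * n - 1 - 2 * i) + (\<Sum>i<n. 2)" by (rule sum.distrib)
    also have "\<dots> = n ^ 2 + 2 * n" using Suc.IH by simp
    finally show ?case by (simp add: power2_eq_square)
  qed simp
  finally show ?thesis .
qed

text \<open>Division by the monic \<open>zeta\<^sub>2\<^sub>n\<^sub>+\<^sub>1\<close> with respect to alpha, followed by induction on the
  gamma-quotient of the remainder.\<close>

lemma std_exps_span: "\<exists>v. supported_on (std_exps n) v \<and> p - v \<in> J_odd n"
proof (induction n arbitrary: p)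
  case 0 then show ?case by (intro exI[of _ 0]) (simp add: supported_on_def J_odd_0)
next
  case (Suc n)
  let ?z = "zeta_int (2 * int n + 1)"
  have m: "degree ?z = 2 * n + 1" "lead_coeff ?z = 1"
    using zeta_int_monic[of "2 * int n + 1"] by (simp_all add: nat_add_distrib)
  then have z0: "?z \<noteq> 0" by auto
  obtain q r where qr: "pseudo_divmod p ?z = (q, r)" by (metis surj_pair)
  have pe: "p = ?z * q + r" using pseudo_divmod(1)[OF z0 qr] m(2) by simp
  have rd: "r = 0 \<or> degree r < 2 * n + 1" using pseudo_divmod(2)[OF z0 qr] m(1) by simp
  obtain v' where v': "supported_on (std_exps n) v'" "gamma_quot r - v' \<in> J_odd n"
    using Suc.IH by blast
  define v where "v = alpha_poly (gamma0 r) + gamma * v'"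
  have "p - v = ?z * q + gamma * (gamma_quot r - v')"
    using gamma0_decomp[of r] pe by (simp add: v_def algebra_simps)
  also have "\<dots> \<in> J_odd (Suc n)"
    using zeta_in_J_odd_Suc(1) gamma_mult_J_odd[OF v'(2)] by (simp add: J_odd_add J_odd_mult_right)
  finally have "p - v \<in> J_odd (Suc n)" .
  moreover have "supported_on (std_exps (Suc n)) v"
    unfolding supported_on_def
  proof (intro allI impI)
    fix j i assume nz: "coeff (coeff v j) i \<noteq> 0"
    show "(j, i) \<in> std_exps (Suc n)"
    proof (cases i)
      case 0
      then have "coeff (gamma0 r) j \<noteq> 0"
        using nz by (simp add: v_def coeff_alpha_poly gamma_mult)
      then show ?thesis
        using 0 le_degree[of "gamma0 r" j] gamma0_degree_le[of r] rd by (auto simp: std_exps_def)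
    next
      case (Suc i')
      then have "coeff (coeff v' j) i' \<noteq> 0" using nz by (simp add: v_def coeff_alpha_poly gamma_mult)
      then show ?thesis using v'(1) Suc unfolding supported_on_def std_exps_def by auto
    qed
  qed
  ultimately show ?case by blast
qed

lemma std_exps_independent:
  assumes "supported_on (std_exps n) v" "v \<in> J_odd n" shows "v = 0"
proof (rule ccontr)
  assume v0: "v \<noteq> 0"
  then have "coeff (coeff v (degree v)) (degree (lead_coeff v)) \<noteq> 0" by simp
  then have "(degree v, degree (lead_coeff v)) \<in> std_exps n"
    using assms(1) unfolding supported_on_def by blast
  then show False using lead_term_J_odd[OF assms(2) v0] by (auto simp: std_exps_def)
qed

section \<open>Monomials and bases of quotients\<close>

lemma alpha_pow: "alpha ^ j = monom 1 j"
  by (induction j) (simp_all add: alpha_mult monom_Suc one_pCons monom_0)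

lemma mon_eq_monom: "mon (j, i) = monom (monom 1 i) j"
proof -
  have X: "([:0, 1:] :: complex poly) ^ i = monom 1 i"
    by (induction i) (simp_all add: monom_Suc one_pCons monom_0)
  have "mon (j, i) = gamma ^ i * alpha ^ j" by (simp add: mon_def mult.commute)
  also have "\<dots> = monom (monom 1 i) j" unfolding gamma_pow_mult alpha_pow X by (simp add: smult_monom)
  finally show ?thesis .
qed

lemma coeff_coeff_mon: "coeff (coeff (mon e) j) i = (if e = (j, i) then 1 else 0)"
  by (cases e) (auto simp: mon_eq_monom coeff_monom)

lemma inj_mon: "inj mon"
proof (rule injI)
  fix x y assume "mon x = mon y"
  then have "coeff (coeff (mon y) (fst x)) (snd x) = 1" using coeff_coeff_mon[of x "fst x" "snd x"] by simp
  then show "x = y" using coeff_coeff_mon[of y "fst x" "snd x"] by (auto split: if_splits)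
qed

lemma coeff_coeff_sum_mon:
  assumes "finite E"
  shows "coeff (coeff (\<Sum>x\<in>E. cst (w x) * mon x) j) i = (if (j, i) \<in> E then w (j, i) else 0)"
proof -
  have "coeff (coeff (\<Sum>x\<in>E. cst (w x) * mon x) j) i = (\<Sum>x\<in>E. if x = (j, i) then w x else 0)"
    by (simp add: coeff_sum cst_mult coeff_coeff_mon if_distrib cong: if_cong)
  then show ?thesis using assms by (simp add: sum.delta')
qed

lemma lexp_gamma_pow_mult:
  assumes "lead_coeff p = 1"
  shows "lexp (gamma ^ k * p) = (degree p, k)"
  using assms by (simp add: lexp_def gamma_pow_mult lead_coeff_smult degree_power_eq del: lead_coeff_smult)

lemma lexp_mon: "lexp (mon e) = e"
proof (cases e)
  case (Pair j i)
  then show ?thesis using lexp_gamma_pow_mult[of "alpha ^ j" i]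
    by (simp add: mon_def mult.commute alpha_pow degree_monom_eq)
qed

lemma mon_lexp_gamma_pow_zeta: "mon (lexp (gamma ^ k * zeta m)) = gamma ^ k * alpha ^ m"
proof -
  have "lexp (gamma ^ k * zeta m) = (m, k)" using lexp_gamma_pow_mult[of "zeta m" k] zeta_monic[of m] by metis
  then show ?thesis by (simp add: mon_def mult.commute)
qed

lemma basis_mod_mon:
  assumes "finite E"
    and span: "\<And>p. \<exists>v. supported_on E v \<and> p - v \<in> J"
    and indep: "\<And>v. supported_on E v \<Longrightarrow> v \<in> J \<Longrightarrow> v = 0"
  shows "basis_mod J (mon ` E)"
proof -
  have reindex: "(\<Sum>b\<in>mon ` E. cst (c b) * b) = (\<Sum>x\<in>E. cst (c (mon x)) * mon x)" for c
    by (simp add: sum.reindex[OF inj_on_subset[OF inj_mon subset_UNIV]])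
  have "\<exists>c. p - (\<Sum>b\<in>mon ` E. cst (c b) * b) \<in> J" for p
  proof -
    obtain v where v: "supported_on E v" "p - v \<in> J" using span by blast
    have "(\<Sum>x\<in>E. cst (coeff (coeff v (fst x)) (snd x)) * mon x) = v"
    proof (rule poly_eqI, rule poly_eqI)
      fix j i
      show "coeff (coeff (\<Sum>x\<in>E. cst (coeff (coeff v (fst x)) (snd x)) * mon x) j) i = coeff (coeff v j) i"
        unfolding coeff_coeff_sum_mon[OF assms(1)] using v(1) by (auto simp: supported_on_def)
    qed
    then have "p - (\<Sum>b\<in>mon ` E. cst (coeff (coeff v (fst (lexp b))) (snd (lexp b))) * b) \<in> J"
      using v(2) unfolding reindex lexp_mon by simp
    then show ?thesis by (rule exI[of _ "\<lambda>b. coeff (coeff v (fst (lexp b))) (snd (lexp b))"])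
  qed
  moreover have "\<forall>b\<in>mon ` E. c b = 0" if "(\<Sum>b\<in>mon ` E. cst (c b) * b) \<in> J" for c
  proof -
    let ?V = "\<Sum>x\<in>E. cst (c (mon x)) * mon x"
    have "supported_on E ?V"
      unfolding supported_on_def coeff_coeff_sum_mon[OF assms(1)] by auto
    then have V0: "?V = 0" using indep that unfolding reindex by blast
    show ?thesis
    proof
      fix b assume "b \<in> mon ` E"
      then obtain j i where "(j, i) \<in> E" "b = mon (j, i)" by auto
      then show "c b = 0"
        using coeff_coeff_sum_mon[OF assms(1), of "\<lambda>x. c (mon x)" j i] V0 by simp
    qed
  qed
  ultimately show ?thesis
    using assms(1) unfolding basis_mod_def spans_mod_def by blast
qed

lemma basis_mod_insert:
  assumes B: "basis_mod I B" and "is_ideal I" "is_ideal J" "J \<subseteq> I" "g \<in> I" "g \<notin> J"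
    and mod_g: "\<And>x. x \<in> I \<Longrightarrow> \<exists>c. x - cst c * g \<in> J"
  shows "basis_mod J (insert g B)"
proof -
  have fB: "finite B" and span: "\<And>p. \<exists>c. p - (\<Sum>b\<in>B. cst (c b) * b) \<in> I"
    and indep: "\<And>c. (\<Sum>b\<in>B. cst (c b) * b) \<in> I \<Longrightarrow> \<forall>b\<in>B. c b = 0"
    using B unfolding basis_mod_def spans_mod_def by blast+
  have gB: "g \<notin> B"
  proof
    assume "g \<in> B"
    have "(\<Sum>b\<in>B. cst (if b = g then 1 else 0) * b) = (\<Sum>b\<in>B. if b = g then b else 0)"
      by (intro sum.cong) auto
    also have "\<dots> = g" using fB \<open>g \<in> B\<close> by simp
    finally have "(\<Sum>b\<in>B. cst (if b = g then 1 else 0) * b) = g" .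
    then show False using indep[of "\<lambda>b. if b = g then 1 else 0"] \<open>g \<in> I\<close> \<open>g \<in> B\<close> by auto
  qed
  have split: "(\<Sum>b\<in>insert g B. cst (c b) * b) = cst (c g) * g + (\<Sum>b\<in>B. cst (c b) * b)" for c
    using fB gB by simp
  have "\<exists>c. p - (\<Sum>b\<in>insert g B. cst (c b) * b) \<in> J" for p
  proof -
    obtain c0 where "p - (\<Sum>b\<in>B. cst (c0 b) * b) \<in> I" using span by blast
    then obtain c' where c': "p - (\<Sum>b\<in>B. cst (c0 b) * b) - cst c' * g \<in> J" using mod_g by blast
    have "(\<Sum>b\<in>B. cst ((c0(g := c')) b) * b) = (\<Sum>b\<in>B. cst (c0 b) * b)"
      using gB by (intro sum.cong) auto
    then have "p - (\<Sum>b\<in>insert g B. cst ((c0(g := c')) b) * b) = p - (\<Sum>b\<in>B. cst (c0 b) * b) - cst c' * g"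
      unfolding split by simp
    then show ?thesis using c' by metis
  qed
  moreover have "\<forall>b\<in>insert g B. c b = 0" if cJ: "(\<Sum>b\<in>insert g B. cst (c b) * b) \<in> J" for c
  proof -
    have "(\<Sum>b\<in>B. cst (c b) * b) = (\<Sum>b\<in>insert g B. cst (c b) * b) - cst (c g) * g"
      unfolding split by simp
    also have "\<dots> \<in> I" using cJ assms(2,4,5) by (auto intro: ideal_diff is_idealD(3))
    finally have cB: "\<forall>b\<in>B. c b = 0" by (rule indep)
    then have "cst (c g) * g \<in> J" using cJ unfolding split by simp
    then have "c g = 0" using ideal_cancel_cst[OF assms(3)] \<open>g \<notin> J\<close> by blast
    then show ?thesis using cB by simp
  qed
  ultimately show ?thesis using fB unfolding basis_mod_def spans_mod_def by blast
qed

interpretation bpoly_space: vector_space "\<lambda>c (p :: bpoly). cst c * p"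
  by unfold_locales (simp_all add: cst_add cst_mult_cst distrib_left distrib_right mult.assoc[symmetric])

text \<open>The representatives \<open>w b \<in> span S\<close> of the basis vectors \<open>b\<close> are linearly independent.\<close>

lemma basis_mod_card_le:
  assumes "basis_mod J B" "is_ideal J" "finite S" "spans_mod J S"
  shows "card B \<le> card S"
proof -
  obtain d where d: "\<And>p. p - (\<Sum>s\<in>S. cst (d p s) * s) \<in> J"
    using assms(4) unfolding spans_mod_def by metis
  define w where "w b = (\<Sum>s\<in>S. cst (d b s) * s)" for b
  have fB: "finite B" and ind: "\<And>c. (\<Sum>b\<in>B. cst (c b) * b) \<in> J \<Longrightarrow> \<forall>b\<in>B. c b = 0"
    using assms(1) unfolding basis_mod_def by blast+
  have key: "\<forall>b\<in>B. c b = 0" if "(\<Sum>b\<in>B. cst (c b) * w b) = 0" for c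
  proof -
    have "(\<Sum>b\<in>B. cst (c b) * b) = (\<Sum>b\<in>B. cst (c b) * (b - w b)) + (\<Sum>b\<in>B. cst (c b) * w b)"
      by (simp add: sum.distrib[symmetric] algebra_simps)
    also have "\<dots> \<in> J"
      using that d by (simp add: w_def ideal_sum[OF assms(2)] is_idealD(3)[OF assms(2)])
    finally show ?thesis by (rule ind)
  qed
  have inj: "inj_on w B"
  proof (rule inj_onI, rule ccontr)
    fix b1 b2 assume b: "b1 \<in> B" "b2 \<in> B" "w b1 = w b2" "b1 \<noteq> b2"
    define c where "c b = (if b = b1 then 1 else 0) - (if b = b2 then (1::complex) else 0)" for b
    have "cst (c b) * w b = (if b = b1 then w b else 0) - (if b = b2 then w b else 0)" for b
      using b(4) by (cases "b = b1"; cases "b = b2") (simp_all add: c_def)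
    then have "(\<Sum>b\<in>B. cst (c b) * w b)
        = (\<Sum>b\<in>B. if b = b1 then w b else 0) - (\<Sum>b\<in>B. if b = b2 then w b else 0)"
      by (simp add: sum_subtractf)
    also have "\<dots> = 0" using b fB by (simp add: sum.delta)
    finally have "\<forall>b\<in>B. c b = 0" by (rule key)
    then show False using b by (auto simp: c_def)
  qed
  have "bpoly_space.independent (w ` B)"
  proof (rule bpoly_space.independent_if_scalars_zero)
    fix f x assume "(\<Sum>x\<in>w ` B. cst (f x) * x) = 0" "x \<in> w ` B"
    then show "f x = 0" using key[of "f \<circ> w"] inj by (auto simp: sum.reindex)
  qed (use fB in simp)
  moreover have "w ` B \<subseteq> bpoly_space.span S"
    unfolding bpoly_space.span_explicit w_def using assms(3) by blast
  ultimately have "card (w ` B) \<le> card S"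
    using bpoly_space.independent_span_bound[OF assms(3)] by blast
  then show ?thesis using card_image[OF inj] by simp
qed

lemma qdeg_eq_card:
  assumes "basis_mod J B" "is_ideal J"
  shows "qdeg J = card B"
  unfolding qdeg_def
proof (rule Least_equality)
  show "\<exists>S. finite S \<and> card S = card B \<and> spans_mod J S"
    using assms(1) unfolding basis_mod_def by blast
qed (use basis_mod_card_le[OF assms] in blast)

lemma basis_mod_J_odd: "basis_mod (J_odd n) (mon ` std_exps n)"
  using finite_std_exps std_exps_span std_exps_independent by (rule basis_mod_mon)

lemma card_mon_std_exps: "card (mon ` std_exps n) = n ^ 2"
  using card_image[OF inj_on_subset[OF inj_mon subset_UNIV]] card_std_exps by simp

lemma gamma_pow_notin_mon_std_exps: "gamma ^ n \<notin> mon ` std_exps n"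
proof
  assume "gamma ^ n \<in> mon ` std_exps n"
  then obtain e where "e \<in> std_exps n" "mon (0, n) = mon e" by (auto simp: mon_def)
  then show False using injD[OF inj_mon] by (fastforce simp: std_exps_def)
qed

section \<open>The derivation d/d alpha - 16 d/d gamma\<close>

definition gamma_deriv :: "bpoly \<Rightarrow> bpoly" where
  "gamma_deriv p = map_poly pderiv p"

definition Der :: "bpoly \<Rightarrow> bpoly" where
  "Der p = pderiv p - 16 * gamma_deriv p"

lemma gamma_deriv_add: "gamma_deriv (p + q) = gamma_deriv p + gamma_deriv q"
  unfolding gamma_deriv_def by (rule map_poly_add_hom) (simp_all add: pderiv_add)

lemma gamma_deriv_mult: "gamma_deriv (p * q) = gamma_deriv p * q + p * gamma_deriv q"
proof (rule poly_eqI)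
  fix n
  have "coeff (gamma_deriv (p * q)) n = (\<Sum>i\<le>n. pderiv (coeff p i * coeff q (n - i)))"
    using sum_comp_morphism[of pderiv "\<lambda>i. coeff p i * coeff q (n - i)" "{..n}"]
    by (simp add: gamma_deriv_def coeff_map_poly coeff_mult pderiv_add comp_def)
  also have "\<dots> = (\<Sum>i\<le>n. pderiv (coeff p i) * coeff q (n - i)) + (\<Sum>i\<le>n. coeff p i * pderiv (coeff q (n - i)))"
    by (simp add: pderiv_mult sum.distrib[symmetric] algebra_simps)
  also have "\<dots> = coeff (gamma_deriv p * q + p * gamma_deriv q) n"
    by (simp add: coeff_mult gamma_deriv_def coeff_map_poly)
  finally show "coeff (gamma_deriv (p * q)) n = coeff (gamma_deriv p * q + p * gamma_deriv q) n" .
qed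

lemma Der_add: "Der (p + q) = Der p + Der q"
  by (simp add: Der_def gamma_deriv_add pderiv_add algebra_simps)

lemma Der_mult: "Der (p * q) = Der p * q + p * Der q"
  by (simp add: Der_def gamma_deriv_mult pderiv_mult algebra_simps)

lemma Der_0 [simp]: "Der 0 = 0"
  by (simp add: Der_def gamma_deriv_def)

lemma Der_diff: "Der (p - q) = Der p - Der q"
  using Der_add[of "p - q" q] by simp

lemma gamma_deriv_const: "gamma_deriv [:c:] = [:pderiv c:]"
  by (rule poly_eqI) (simp add: gamma_deriv_def coeff_map_poly coeff_pCons split: nat.splits)

lemma Der_alpha [simp]: "Der alpha = 1"
proof -
  have "gamma_deriv alpha = 0"
    by (rule poly_eqI) (simp add: gamma_deriv_def coeff_map_poly alpha_def coeff_pCons split: nat.splits)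
  then show ?thesis by (simp add: Der_def alpha_def pderiv_pCons)
qed

lemma Der_gamma [simp]: "Der gamma = - 16"
proof -
  have "gamma_deriv gamma = 1" unfolding gamma_def gamma_deriv_const by (simp add: pderiv_pCons one_pCons)
  then show ?thesis by (simp add: Der_def gamma_def pderiv_pCons)
qed

lemma Der_cst [simp]: "Der (cst c) = 0"
  by (simp add: Der_def cst_def gamma_deriv_const pderiv_pCons)

lemma Der_of_int [simp]: "Der (of_int k) = 0"
  by (simp add: of_int_bpoly)

lemma Der_1 [simp]: "Der 1 = 0"
  using Der_of_int[of 1] by simp

lemma Der_of_nat [simp]: "Der (of_nat k) = 0"
  using Der_of_int[of "int k"] by simp

lemma Der_pow_0 [simp]: "(Der ^^ k) 0 = 0"
  by (induction k) simp_all

lemma Der_alpha_mult: "Der (alpha * p) = p + alpha * Der p"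
  by (simp add: Der_mult)

lemma Der_gamma_mult: "Der (gamma * p) = gamma * Der p - 16 * p"
  by (simp add: Der_mult algebra_simps)

lemma Der_cst_mult: "Der (cst c * p) = cst c * Der p"
  by (simp add: Der_mult)

lemma Der_of_int_mult: "Der (of_int k * p) = of_int k * Der p"
  by (simp add: of_int_bpoly Der_cst_mult)

lemma Der_pow_add: "(Der ^^ k) (p + q) = (Der ^^ k) p + (Der ^^ k) q"
  by (induction k) (simp_all add: Der_add)

lemma Der_pow_cst_mult: "(Der ^^ k) (cst c * p) = cst c * (Der ^^ k) p"
  by (induction k) (simp_all add: Der_cst_mult)

lemma Der_pow_gamma_mult:
  "(Der ^^ Suc k) (gamma * p) = gamma * (Der ^^ Suc k) p - of_int (16 * int (Suc k)) * (Der ^^ k) p"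
proof (induction k)
  case (Suc k)
  have "(Der ^^ Suc (Suc k)) (gamma * p) = Der ((Der ^^ Suc k) (gamma * p))" by simp
  also have "\<dots> = Der (gamma * (Der ^^ Suc k) p) - of_int (16 * int (Suc k)) * Der ((Der ^^ k) p)"
    unfolding Suc by (simp only: Der_diff Der_of_int_mult)
  also have "\<dots> = gamma * (Der ^^ Suc (Suc k)) p - of_int (16 * int (Suc (Suc k))) * (Der ^^ Suc k) p"
    by (simp add: Der_gamma_mult algebra_simps)
  finally show ?case .
qed (simp add: Der_gamma_mult)

lemma Der_pow_alpha_mult:
  "(Der ^^ Suc k) (alpha * p) = alpha * (Der ^^ Suc k) p + of_int (int (Suc k)) * (Der ^^ k) p"
proof (induction k)
  case (Suc k)
  have "(Der ^^ Suc (Suc k)) (alpha * p)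
      = Der (alpha * (Der ^^ Suc k) p) + of_int (int (Suc k)) * Der ((Der ^^ k) p)"
    unfolding funpow.simps(2) comp_def Suc[simplified] by (simp add: Der_add Der_mult)
  then show ?case by (simp add: Der_alpha_mult algebra_simps)
qed (simp add: Der_alpha_mult)

lemma Der_zeta_int_even_step:
  assumes "K \<ge> 2" "even K"
    and "Der (zeta_int (K - 1)) = of_int (K - 1) * zeta_int (K - 2)"
    and "Der (zeta_int (K - 3)) = of_int (K - 3) * zeta_int (K - 4)"
  shows "Der (zeta_int K) = of_int K * (zeta_int (K - 1) - of_int (16 * (K - 2) * (K - 1)) * zeta_int (K - 3))"
proof -
  define k where "k = (of_int K :: bpoly)"
  define c where "c = (of_int (2 * (K - 1) * (K - 2)) :: bpoly)"
  have r: "zeta_int K = alpha * zeta_int (K - 1) + c * gamma * zeta_int (K - 3)"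
    using zeta_int_rec_odd[of "K - 1"] assms(1,2) unfolding c_def by (simp add: algebra_simps)
  have r2: "zeta_int (K - 1) = alpha * zeta_int (K - 2) + 16 * (k - 2)^2 * zeta_int (K - 3)
      + 2 * (k - 2) * (k - 3) * gamma * zeta_int (K - 4)"
    using zeta_int_rec_even[of "K - 2"] assms(1,2) unfolding k_def by simp
  have "Der c = 0" unfolding c_def by (rule Der_of_int)
  then have "Der (zeta_int K) = zeta_int (K - 1) + alpha * Der (zeta_int (K - 1))
      + c * (gamma * Der (zeta_int (K - 3)) - 16 * zeta_int (K - 3))"
    unfolding r by (simp add: Der_add Der_mult algebra_simps)
  also have "\<dots> = k * (zeta_int (K - 1) - 16 * (k - 2) * (k - 1) * zeta_int (K - 3))"
  proof -
    have alg: "A + alpha * ((k - 1) * B) + c * (gamma * ((k - 3) * D) - 16 * C) = k * (A - 16 * (k - 2) * (k - 1) * C)"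
      if "A = alpha * B + 16 * (k - 2)^2 * C + 2 * (k - 2) * (k - 3) * gamma * D" "c = 2 * (k - 1) * (k - 2)"
      for A B C D c k :: bpoly
      using that by algebra
    have "of_int (K - 1) = k - 1" "of_int (K - 3) = k - 3" "c = 2 * (k - 1) * (k - 2)"
      by (simp_all add: k_def c_def)
    then show ?thesis unfolding assms(3,4) using alg[OF r2] by simp
  qed
  finally show ?thesis unfolding k_def by simp
qed

lemma Der_zeta_int_odd_step:
  assumes "K \<ge> 2" "odd K"
    and "Der (zeta_int (K - 1)) = of_int (K - 1) * (zeta_int (K - 2) - of_int (16 * (K - 3) * (K - 2)) * zeta_int (K - 4))"
    and "Der (zeta_int (K - 2)) = of_int (K - 2) * zeta_int (K - 3)"
    and "Der (zeta_int (K - 3)) = of_int (K - 3) * (zeta_int (K - 4) - of_int (16 * (K - 5) * (K - 4)) * zeta_int (K - 6))"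
  shows "Der (zeta_int K) = of_int K * zeta_int (K - 1)"
proof -
  define k where "k = (of_int K :: bpoly)"
  define c1 where "c1 = (of_int (16 * (K - 1)^2) :: bpoly)"
  define c2 where "c2 = (of_int (2 * (K - 1) * (K - 2)) :: bpoly)"
  have r: "zeta_int K = alpha * zeta_int (K - 1) + c1 * zeta_int (K - 2) + c2 * gamma * zeta_int (K - 3)"
    using zeta_int_rec_even[of "K - 1"] assms(1,2) unfolding c1_def c2_def by (simp add: algebra_simps)
  have r2: "zeta_int (K - 1) = alpha * zeta_int (K - 2) + 2 * (k - 2) * (k - 3) * gamma * zeta_int (K - 4)"
    using zeta_int_rec_odd[of "K - 2"] assms(1,2) unfolding k_def by simp
  \<comment> \<open>the factor \<open>k - 3\<close> makes this hold also for \<open>K = 3\<close>, where the recursion does not apply\<close>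
  have r3: "(k - 3) * zeta_int (K - 3)
      = (k - 3) * (alpha * zeta_int (K - 4) + 2 * (k - 4) * (k - 5) * gamma * zeta_int (K - 6))"
  proof (cases "K = 3")
    case False
    then have "K - 4 \<ge> 0" using assms(1,2) by presburger
    then show ?thesis using zeta_int_rec_odd[of "K - 4"] assms(2) unfolding k_def by simp
  qed (simp add: k_def)
  have "Der c1 = 0" "Der c2 = 0" unfolding c1_def c2_def by (rule Der_of_int)+
  then have "Der (zeta_int K) = zeta_int (K - 1) + alpha * Der (zeta_int (K - 1)) + c1 * Der (zeta_int (K - 2))
      + c2 * (gamma * Der (zeta_int (K - 3)) - 16 * zeta_int (K - 3))"
    unfolding r by (simp add: Der_add Der_mult algebra_simps)
  also have "\<dots> = k * zeta_int (K - 1)"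
  proof -
    have alg: "A + alpha * ((k - 1) * (B - 16 * (k - 3) * (k - 2) * D)) + c1 * ((k - 2) * C)
        + c2 * (gamma * ((k - 3) * (D - 16 * (k - 5) * (k - 4) * E)) - 16 * C) = k * A"
      if "A = alpha * B + 2 * (k - 2) * (k - 3) * gamma * D"
        "(k - 3) * C = (k - 3) * (alpha * D + 2 * (k - 4) * (k - 5) * gamma * E)"
        "c1 = 16 * (k - 1)^2" "c2 = 2 * (k - 1) * (k - 2)"
      for A B C D E c1 c2 k :: bpoly
      using that by algebra
    have "of_int (K - 1) = k - 1" "of_int (K - 2) = k - 2" "of_int (K - 3) = k - 3"
      "of_int (16 * (K - 3) * (K - 2)) = 16 * (k - 3) * (k - 2)"
      "of_int (16 * (K - 5) * (K - 4)) = 16 * (k - 5) * (k - 4)"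
      "c1 = 16 * (k - 1)^2" "c2 = 2 * (k - 1) * (k - 2)"
      by (simp_all add: k_def c1_def c2_def)
    then show ?thesis unfolding assms(3-5) using alg[OF r2 r3] by simp
  qed
  finally show ?thesis unfolding k_def .
qed

lemma Der_zeta_int:
  "Der (zeta_int k) = (if odd k then of_int k * zeta_int (k - 1)
     else of_int k * (zeta_int (k - 1) - of_int (16 * (k - 2) * (k - 1)) * zeta_int (k - 3)))"
  (is "Der (zeta_int k) = ?F k")
proof (cases "k < 0")
  case False
  then obtain m where km: "k = int m" by (metis nat_0_le not_less)
  have "Der (zeta_int (int m)) = ?F (int m)"
  proof (induction m rule: less_induct)
    case (less m)
    show ?case
    proof (cases "m \<ge> 2")
      case True
      have IH: "Der (zeta_int j) = ?F j" if "j < int m" for j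
        using less.IH[of "nat j"] that by (cases "j < 0") simp_all
      show ?thesis
      proof (cases "even (int m)")
        case True
        then show ?thesis using Der_zeta_int_even_step[of "int m"] IH[of "int m - 1"] IH[of "int m - 3"] \<open>m \<ge> 2\<close>
          by simp
      next
        case False
        then show ?thesis
          using Der_zeta_int_odd_step[of "int m"] IH[of "int m - 1"] IH[of "int m - 2"] IH[of "int m - 3"] \<open>m \<ge> 2\<close>
          by simp
      qed
    next
      case False
      then consider "m = 0" | "m = 1" by linarith
      then show ?thesis by cases simp_all
    qed
  qed
  then show ?thesis using km by simp
qed simp

lemma Der_zeta_odd: "Der (zeta_int (2 * int m + 1)) = of_int (2 * int m + 1) * zeta_int (2 * int m)"
  by (simp add: Der_zeta_int)

lemma Der_zeta_even:
  "Der (zeta_int (2 * int m + 2)) = of_int (2 * int m + 2) *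
     (zeta_int (2 * int m + 1) - of_int (16 * (2 * int m) * (2 * int m + 1)) * zeta_int (2 * int m - 1))"
proof -
  have e: "2 * int m + 2 - 1 = 2 * int m + 1" "2 * int m + 2 - 3 = 2 * int m - 1" "2 * int m + 2 - 2 = 2 * int m"
    by simp_all
  show ?thesis unfolding Der_zeta_int e by simp
qed

lemma Der_J_odd: "x \<in> J_odd (Suc n) \<Longrightarrow> Der x \<in> J_odd n"
proof -
  assume "x \<in> J_odd (Suc n)"
  \<comment> \<open>the product rule needs \<open>x \<in> J_odd n\<close> as well\<close>
  then have "x \<in> J_odd n \<and> Der x \<in> J_odd n" unfolding J_odd_Suc
  proof (induction rule: gen_ideal_induct)
    case (gen s)
    have "Der (zeta_int (2 * int n + 3)) \<in> J_odd n"
    proof -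
      have e: "2 * int n + 3 - 1 = 2 * int n + 2" by simp
      have "Der (zeta_int (2 * int n + 3)) = of_int (2 * int n + 3) * zeta_int (2 * int n + 2)"
        unfolding Der_zeta_int e by simp
      then show ?thesis using J_odd_mult[OF zeta_in_J_odd(4)] by simp
    qed
    then show ?case using gen zeta_in_J_odd
      by (auto simp: Der_zeta_odd Der_zeta_even intro!: J_odd_mult J_odd_diff)
  qed (auto simp: J_odd_zero Der_add Der_mult intro: J_odd_add J_odd_mult)
  then show ?thesis by blast
qed

lemma Der_pow_J_odd: "x \<in> J_odd (n + k) \<Longrightarrow> (Der ^^ k) x \<in> J_odd n"
proof (induction k arbitrary: x)
  case (Suc k)
  have "(Der ^^ k) (Der x) \<in> J_odd n" using Suc Der_J_odd[of x "n + k"] by simp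
  then show ?case by (simp add: funpow_Suc_right del: funpow.simps)
qed simp

section \<open>Linear functionals detecting J_(2n+1) inside J_(2n-1)\<close>

definition zeta0 :: "nat \<Rightarrow> complex poly" where
  "zeta0 j = gamma0 (zeta_int (2 * int j - 1))"

definition quad :: "nat \<Rightarrow> complex poly" where
  "quad j = [:64 * (of_nat j)^2, 0, 1:]"

lemma zeta0_Suc: "zeta0 (Suc j) = gamma0 (zeta_int (2 * int j + 1))"
proof -
  have "2 * int (Suc j) - 1 = 2 * int j + 1" by simp
  then show ?thesis unfolding zeta0_def by (simp only:)
qed

lemma zeta0_ne_0: "j \<ge> 1 \<Longrightarrow> zeta0 j \<noteq> 0"
  using gamma0_zeta_odd(1)[of "j - 1"] zeta0_Suc[of "j - 1"] by simp

lemma gamma0_zeta_2n2: "gamma0 (zeta_int (2 * int n + 2)) = [:0, 1:] * gamma0 (zeta_int (2 * int n + 1))"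
  by (simp add: zeta_rec_2n2 gamma0_add gamma0_mult)

lemma gamma0_zeta_2n3: "gamma0 (zeta_int (2 * int n + 3)) = quad (Suc n) * zeta0 (Suc n)"
proof -
  have "gamma0 (zeta_int (2 * int n + 3)) = [:0, 1:] * ([:0, 1:] * zeta0 (Suc n))
      + of_int (16 * (2 * int n + 2)^2) * zeta0 (Suc n)"
    unfolding zeta_rec_2n3 zeta0_Suc
    by (simp only: gamma0_add gamma0_mult gamma0_zeta_2n2 gamma0_of_int gamma0_gamma gamma0_alpha
        mult_zero_left mult_zero_right add_0_right)
  also have "\<dots> = quad (Suc n) * zeta0 (Suc n)"
    by (simp add: quad_def algebra_simps of_int_poly power2_eq_square)
  finally show ?thesis .
qed

lemma zeta0_Suc_Suc: "zeta0 (Suc (Suc j)) = quad (Suc j) * zeta0 (Suc j)"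
proof -
  have "2 * int (Suc (Suc j)) - 1 = 2 * int j + 3" by simp
  then show ?thesis unfolding zeta0_def[of "Suc (Suc j)"] gamma0_zeta_2n3[symmetric] by (simp only:)
qed

lemma zeta0_dvd_gamma0:
  assumes "j \<ge> 1" "x \<in> J_odd j"
  shows "zeta0 j dvd gamma0 x"
proof -
  obtain i where j: "j = Suc i" using assms(1) by (cases j) auto
  from assms(2) show ?thesis unfolding j J_odd_Suc
  proof (induction rule: gen_ideal_induct)
    case (gen s)
    have "pCons 0 (zeta0 (Suc i)) = zeta0 (Suc i) * [:0, 1:]" by simp
    then have "zeta0 (Suc i) dvd pCons 0 (zeta0 (Suc i))" by (metis dvd_triv_left)
    then show ?case using gen by (auto simp: gamma0_zeta_2n2 gamma0_zeta_2n3 zeta0_Suc)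
  qed (simp_all add: gamma0_add gamma0_mult)
qed

lemma quad_root_iff: "poly (quad j) \<mu> = 0 \<longleftrightarrow> \<mu> = 8 * \<i> * of_nat j \<or> \<mu> = - (8 * \<i> * of_nat j)"
proof -
  have "poly (quad j) \<mu> = (\<mu> - 8 * \<i> * of_nat j) * (\<mu> + 8 * \<i> * of_nat j)"
    by (simp add: quad_def algebra_simps power2_eq_square)
  then show ?thesis by (simp add: eq_neg_iff_add_eq_0)
qed

lemma quad_dvd:
  assumes "j \<ge> 1" "poly w (8 * \<i> * of_nat j) = 0" "poly w (- (8 * \<i> * of_nat j)) = 0"
  shows "quad j dvd w"
proof -
  let ?m = "8 * \<i> * of_nat j :: complex"
  obtain w1 where w1: "w = [:- ?m, 1:] * w1" using assms(2) by (metis poly_eq_0_iff_dvd dvdE)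
  have "poly w1 (- ?m) = 0" using assms(1,3) unfolding w1 by simp
  then obtain w2 where w2: "w1 = [:- (- ?m), 1:] * w2" by (metis poly_eq_0_iff_dvd dvdE)
  have "?m * ?m = - (64 * (of_nat j)^2)"
    by (simp add: power2_eq_square[symmetric] power_mult_distrib)
  then have "quad j = [:- ?m, 1:] * [:- (- ?m), 1:]" by (simp add: quad_def)
  moreover have "w = ([:- ?m, 1:] * [:- (- ?m), 1:]) * w2" using w1 w2 by (simp only: mult.assoc)
  ultimately show ?thesis by (metis dvd_triv_left)
qed

lemma quad_root_ne_0: "1 \<le> j \<Longrightarrow> poly (quad j) \<mu> = 0 \<Longrightarrow> \<mu> \<noteq> 0"
  by (auto simp: quad_root_iff)

lemma quad_root_unique: "1 \<le> j \<Longrightarrow> 1 \<le> j' \<Longrightarrow> poly (quad j) \<mu> = 0 \<Longrightarrow> poly (quad j') \<mu> = 0 \<Longrightarrow> j = j'"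
proof -
  assume a: "poly (quad j) \<mu> = 0" "poly (quad j') \<mu> = 0"
  have "\<mu> * \<mu> = - (64 * (of_nat j)^2)" "\<mu> * \<mu> = - (64 * (of_nat j')^2)"
    using a by (simp_all add: quad_def algebra_simps eq_neg_iff_add_eq_0 power2_eq_square)
  then have "(of_nat (j^2) :: complex) = of_nat (j'^2)" by simp
  then have "j^2 = j'^2" by (simp only: of_nat_eq_iff)
  then show "j = j'" by (simp add: power_eq_iff_eq_base)
qed

lemma finite_quad_roots: "finite {\<mu>. \<exists>j. 1 \<le> j \<and> j \<le> n \<and> poly (quad j) \<mu> = 0}"
proof (rule finite_subset)
  show "{\<mu>. \<exists>j. 1 \<le> j \<and> j \<le> n \<and> poly (quad j) \<mu> = 0} \<subseteq> (\<Union>j\<in>{1..n}. {\<mu>. poly (quad j) \<mu> = 0})"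
    by auto
  show "finite (\<Union>j\<in>{1..n}. {\<mu>. poly (quad j) \<mu> = 0})"
    using poly_roots_finite[of "quad j" for j] by (auto simp: quad_def)
qed

text \<open>On \<open>J_odd n\<close>, with \<open>1 \<le> j \<le> n\<close> and \<open>mu\<close> a root of \<open>quad j\<close>, the functionals \<open>phi n j mu\<close>
  and \<open>phi0 n\<close> vanish exactly on \<open>J_odd (Suc n)\<close>. The polynomial division in \<open>psi\<close> is exact on
  \<open>J_odd j\<close>, which contains \<open>Der\<^sup>n\<^sup>-\<^sup>j p\<close>.\<close>

definition psi :: "nat \<Rightarrow> complex \<Rightarrow> bpoly \<Rightarrow> complex" where
  "psi j \<mu> x = poly (gamma0 x div zeta0 j) \<mu>"

definition phi :: "nat \<Rightarrow> nat \<Rightarrow> complex \<Rightarrow> bpoly \<Rightarrow> complex" where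
  "phi n j \<mu> p = psi j \<mu> ((Der ^^ (n - j)) p)"

definition phi0 :: "nat \<Rightarrow> bpoly \<Rightarrow> complex" where
  "phi0 n p = poly (gamma0 ((Der ^^ n) p)) 0"

lemma psi_add: "psi j \<mu> (x + y) = psi j \<mu> x + psi j \<mu> y"
  by (simp add: psi_def gamma0_add poly_div_add_left)

lemma psi_cst_mult: "psi j \<mu> (cst c * x) = c * psi j \<mu> x"
  by (simp add: psi_def gamma0_mult div_smult_left)

lemma psi_diff: "psi j \<mu> (x - y) = psi j \<mu> x - psi j \<mu> y"
  by (simp add: psi_def gamma0_diff poly_div_diff_left)

lemma psi_of_int_mult: "psi j \<mu> (of_int k * x) = of_int k * psi j \<mu> x"
  using psi_cst_mult[of j \<mu> "of_int k" x] by (simp add: of_int_bpoly)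

lemma psi_gamma_mult: "psi j \<mu> (gamma * x) = 0"
  by (simp add: psi_def gamma0_mult)

lemma phi_add: "phi n j \<mu> (p + q) = phi n j \<mu> p + phi n j \<mu> q"
  by (simp add: phi_def Der_pow_add psi_add)

lemma phi_cst_mult: "phi n j \<mu> (cst c * p) = c * phi n j \<mu> p"
  by (simp add: phi_def Der_pow_cst_mult psi_cst_mult)

lemma phi_diff: "phi n j \<mu> (p - q) = phi n j \<mu> p - phi n j \<mu> q"
  using phi_add[of n j \<mu> "p - q" q] by simp

lemma phi_of_int_mult: "phi n j \<mu> (of_int k * p) = of_int k * phi n j \<mu> p"
  using phi_cst_mult[of n j \<mu> "of_int k" p] by (simp add: of_int_bpoly)

lemma phi0_add: "phi0 n (p + q) = phi0 n p + phi0 n q"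
  by (simp add: phi0_def Der_pow_add gamma0_add)

lemma phi0_cst_mult: "phi0 n (cst c * p) = c * phi0 n p"
  by (simp add: phi0_def Der_pow_cst_mult gamma0_mult)

lemma phi0_diff: "phi0 n (p - q) = phi0 n p - phi0 n q"
  using phi0_add[of n "p - q" q] by simp

lemma phi0_of_int_mult: "phi0 n (of_int k * p) = of_int k * phi0 n p"
  using phi0_cst_mult[of n "of_int k" p] by (simp add: of_int_bpoly)

lemma psi_J_odd_Suc:
  assumes "j \<ge> 1" "x \<in> J_odd (Suc j)" "poly (quad j) \<mu> = 0"
  shows "psi j \<mu> x = 0"
proof -
  obtain w where w: "gamma0 x = zeta0 (Suc j) * w" using zeta0_dvd_gamma0[of "Suc j" x] assms(2) by (auto elim: dvdE)
  obtain i where i: "j = Suc i" using assms(1) by (cases j) auto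
  have "gamma0 x = zeta0 j * (quad j * w)" unfolding w i zeta0_Suc_Suc by (simp add: algebra_simps)
  then show ?thesis using assms(3) zeta0_ne_0[OF assms(1)] by (simp add: psi_def)
qed

lemma phi_J_odd_Suc:
  assumes "p \<in> J_odd (Suc n)" "1 \<le> j" "j \<le> n" "poly (quad j) \<mu> = 0"
  shows "phi n j \<mu> p = 0"
proof -
  have "(Der ^^ (n - j)) p \<in> J_odd (Suc j)" using assms Der_pow_J_odd[of p "Suc j" "n - j"] by simp
  then show ?thesis unfolding phi_def using psi_J_odd_Suc[OF assms(2) _ assms(4)] by simp
qed

lemma poly_gamma0_J_odd_1: "x \<in> J_odd 1 \<Longrightarrow> poly (gamma0 x) 0 = 0"
  using zeta0_dvd_gamma0[of 1 x] by (auto simp: zeta0_def)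

lemma phi0_J_odd_Suc: "p \<in> J_odd (Suc n) \<Longrightarrow> phi0 n p = 0"
  unfolding phi0_def using Der_pow_J_odd[of p 1 n] poly_gamma0_J_odd_1 by simp

lemma phi_gamma_mult:
  assumes "j \<le> n"
  shows "phi (Suc n) j \<mu> (gamma * q) = - 16 * of_nat (Suc n - j) * phi n j \<mu> q"
proof -
  obtain k where k: "Suc n - j = Suc k" "n - j = k" using assms by (metis Suc_diff_le diff_Suc_Suc)
  show ?thesis unfolding phi_def k Der_pow_gamma_mult psi_diff psi_gamma_mult psi_of_int_mult
    by (simp add: algebra_simps)
qed

lemma phi0_gamma_mult: "phi0 (Suc n) (gamma * q) = - 16 * of_nat (Suc n) * phi0 n q"
  unfolding phi0_def Der_pow_gamma_mult gamma0_diff gamma0_mult gamma0_of_int gamma0_gamma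
  by (simp add: algebra_simps)

lemma phi_alpha_mult:
  assumes "p \<in> J_odd n" "1 \<le> j" "j \<le> n" "poly (quad j) \<mu> = 0"
  shows "phi n j \<mu> (alpha * p) = \<mu> * phi n j \<mu> p"
proof -
  have psi_alpha: "psi j \<mu> (alpha * x) = \<mu> * psi j \<mu> x" if x: "x \<in> J_odd j" for x
  proof -
    obtain w where w: "gamma0 x = zeta0 j * w" using zeta0_dvd_gamma0[OF assms(2) x] by (auto elim: dvdE)
    have a: "gamma0 (alpha * x) = zeta0 j * ([:0, 1:] * w)" using w by (simp add: gamma0_mult algebra_simps)
    have "gamma0 (alpha * x) div zeta0 j = [:0, 1:] * w"
      unfolding a using zeta0_ne_0[OF assms(2)] by (rule nonzero_mult_div_cancel_left)
    moreover have "gamma0 x div zeta0 j = w"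
      unfolding w using zeta0_ne_0[OF assms(2)] by (rule nonzero_mult_div_cancel_left)
    ultimately show ?thesis by (simp add: psi_def)
  qed
  show ?thesis
  proof (cases "n = j")
    case True then show ?thesis unfolding phi_def using psi_alpha assms(1) by simp
  next
    case False
    then obtain k where k: "n - j = Suc k" using assms(3) by (metis Suc_diff_Suc le_neq_implies_less)
    have nn: "n = j + Suc k" "n = Suc j + k" using assms(3) k by arith+
    have "(Der ^^ Suc k) p \<in> J_odd j" by (rule Der_pow_J_odd) (use assms(1) nn(1) in simp)
    moreover have "(Der ^^ k) p \<in> J_odd (Suc j)" by (rule Der_pow_J_odd) (use assms(1) nn(2) in simp)
    ultimately show ?thesis
      unfolding phi_def k Der_pow_alpha_mult psi_add psi_of_int_mult
      using psi_alpha psi_J_odd_Suc[OF assms(2) _ assms(4)] by simp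
  qed
qed

lemma phi0_alpha_mult:
  assumes "p \<in> J_odd n"
  shows "phi0 n (alpha * p) = 0"
proof (cases n)
  case (Suc k)
  have "(Der ^^ k) p \<in> J_odd 1" using Der_pow_J_odd[of p 1 k] assms Suc by simp
  then show ?thesis unfolding phi0_def Suc Der_pow_alpha_mult
    using poly_gamma0_J_odd_1 by (simp add: gamma0_add gamma0_mult)
qed (simp add: phi0_def gamma0_mult)

lemma phi_mult:
  assumes "p \<in> J_odd n" "1 \<le> j" "j \<le> n" "poly (quad j) \<mu> = 0"
  shows "phi n j \<mu> (a * p) = poly (gamma0 a) \<mu> * phi n j \<mu> p"
proof -
  have "phi n j \<mu> (alpha_poly e * p) = poly e \<mu> * phi n j \<mu> p" for e
  proof (induction e)
    case (pCons c e)
    have "phi n j \<mu> (alpha_poly (pCons c e) * p) = c * phi n j \<mu> p + phi n j \<mu> (alpha * (alpha_poly e * p))"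
      unfolding alpha_poly_pCons by (simp add: distrib_right phi_add phi_cst_mult mult.assoc)
    also have "phi n j \<mu> (alpha * (alpha_poly e * p)) = \<mu> * (poly e \<mu> * phi n j \<mu> p)"
      using phi_alpha_mult[OF J_odd_mult[OF assms(1)] assms(2-4)] pCons(2) by simp
    finally show ?case by (simp add: algebra_simps)
  qed (simp add: alpha_poly_def phi_def psi_def)
  moreover have "phi n j \<mu> (gamma * (gamma_quot a * p)) = 0"
    using phi_J_odd_Suc[OF gamma_mult_J_odd[OF J_odd_mult[OF assms(1)]] assms(2-4)] .
  moreover have "a * p = alpha_poly (gamma0 a) * p + gamma * (gamma_quot a * p)"
    by (subst gamma0_decomp[of a]) (simp add: algebra_simps)
  ultimately show ?thesis by (simp add: phi_add)
qed

lemma phi0_mult: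
  assumes "p \<in> J_odd n"
  shows "phi0 n (a * p) = poly (gamma0 a) 0 * phi0 n p"
proof -
  have "phi0 n (alpha_poly e * p) = poly e 0 * phi0 n p" for e
  proof (induction e)
    case (pCons c e)
    have "phi0 n (alpha * (alpha_poly e * p)) = 0"
      using phi0_alpha_mult[OF J_odd_mult[OF assms]] .
    then show ?case
      unfolding alpha_poly_pCons by (simp add: distrib_right phi0_add phi0_cst_mult mult.assoc)
  qed (simp add: alpha_poly_def phi0_def)
  moreover have "phi0 n (gamma * (gamma_quot a * p)) = 0"
    using phi0_J_odd_Suc[OF gamma_mult_J_odd[OF J_odd_mult[OF assms]]] .
  moreover have "a * p = alpha_poly (gamma0 a) * p + gamma * (gamma_quot a * p)"
    by (subst gamma0_decomp[of a]) (simp add: algebra_simps)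
  ultimately show ?thesis by (simp add: phi0_add)
qed

text \<open>The top functionals \<open>phi (Suc n) (Suc n)\<close> see the quotient of \<open>p(alpha, 0)\<close> by
  \<open>zeta0 (Suc n)\<close>; if they vanish, this quotient is divisible by \<open>quad (Suc n)\<close>, so that
  \<open>p(alpha, 0)\<close> is a multiple of \<open>zeta\<^sub>2\<^sub>n\<^sub>+\<^sub>3(alpha, 0)\<close>.\<close>

lemma J_odd_Suc_top_decomp:
  assumes "p \<in> J_odd (Suc n)" "\<And>\<mu>. poly (quad (Suc n)) \<mu> = 0 \<Longrightarrow> phi (Suc n) (Suc n) \<mu> p = 0"
  obtains s q where "q \<in> J_odd n" "p = s * zeta_int (2 * int n + 3) + gamma * q"
proof -
  let ?z = "zeta_int (2 * int n + 3)"
  obtain w where w: "gamma0 p = zeta0 (Suc n) * w"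
    using zeta0_dvd_gamma0[of "Suc n" p] assms(1) by (auto elim: dvdE)
  have "phi (Suc n) (Suc n) \<mu> p = poly w \<mu>" for \<mu>
    unfolding phi_def psi_def using w zeta0_ne_0[of "Suc n"] by simp
  then have "poly w (8 * \<i> * of_nat (Suc n)) = 0" "poly w (- (8 * \<i> * of_nat (Suc n))) = 0"
    using assms(2) by (auto simp: quad_root_iff)
  then obtain w2 where w2: "w = quad (Suc n) * w2" using quad_dvd[of "Suc n" w] by (auto elim: dvdE)
  define s where "s = alpha_poly w2"
  have "gamma0 (p - s * ?z) = 0"
    unfolding s_def gamma0_diff gamma0_mult gamma0_alpha_poly w w2 gamma0_zeta_2n3 by (simp add: algebra_simps)
  then have pq: "p - s * ?z = gamma * gamma_quot (p - s * ?z)" by (rule gamma0_eq_0_imp)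
  have "gamma * gamma_quot (p - s * ?z) \<in> J_odd (Suc n)"
    unfolding pq[symmetric] using assms(1) zeta_in_J_odd_Suc(3) by (simp add: J_odd_diff J_odd_mult)
  then have "gamma_quot (p - s * ?z) \<in> J_odd n" by (rule J_odd_Suc_gamma_cancel)
  moreover have "p = s * ?z + gamma * gamma_quot (p - s * ?z)" using pq by (simp add: algebra_simps)
  ultimately show thesis by (rule that)
qed

lemma J_odd_Suc_if_functionals_vanish:
  assumes "p \<in> J_odd n" "phi0 n p = 0"
    and "\<And>j \<mu>. 1 \<le> j \<Longrightarrow> j \<le> n \<Longrightarrow> poly (quad j) \<mu> = 0 \<Longrightarrow> phi n j \<mu> p = 0"
  shows "p \<in> J_odd (Suc n)"
  using assms
proof (induction n arbitrary: p)
  case 0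
  have "poly (gamma0 p) 0 = 0" using "0.prems"(2) by (simp add: phi0_def)
  then obtain e where e: "gamma0 p = [:0, 1:] * e" using poly_eq_0_iff_dvd[of "gamma0 p" 0] by (auto elim: dvdE)
  have "p = alpha * alpha_poly e + gamma * gamma_quot p"
    using gamma0_decomp[of p] unfolding e alpha_poly_mult alpha_poly_X .
  also have "\<dots> \<in> J_odd 1"
    using zeta_in_J_odd(1)[of 1] gamma_mult_J_odd[of 1 0] by (simp add: J_odd_0 J_odd_add J_odd_mult_right)
  finally show ?case by simp
next
  case (Suc n)
  let ?z = "zeta_int (2 * int n + 3)"
  have sz: "s * ?z \<in> J_odd (Suc (Suc n))" for s using zeta_2n3_in_J_odd by (rule J_odd_mult)
  obtain s q where qJ: "q \<in> J_odd n" and pe: "p = s * ?z + gamma * q"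
  proof (rule J_odd_Suc_top_decomp[OF Suc.prems(1)])
    show "phi (Suc n) (Suc n) \<mu> p = 0" if "poly (quad (Suc n)) \<mu> = 0" for \<mu>
      using Suc.prems(3) that by simp
  qed
  have "- 16 * of_nat (Suc n) * phi0 n q = phi0 (Suc n) p"
    unfolding pe phi0_add phi0_J_odd_Suc[OF sz] phi0_gamma_mult by simp
  then have "phi0 n q = 0" using Suc.prems(2) by (simp del: of_nat_Suc)
  moreover have "phi n j \<mu> q = 0" if j: "1 \<le> j" "j \<le> n" "poly (quad j) \<mu> = 0" for j \<mu>
  proof -
    have "phi (Suc n) j \<mu> (s * ?z) = 0" using phi_J_odd_Suc[OF sz] j by simp
    then have "- 16 * of_nat (Suc n - j) * phi n j \<mu> q = phi (Suc n) j \<mu> p"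
      unfolding pe phi_add phi_gamma_mult[OF j(2)] by simp
    also have "\<dots> = 0" using Suc.prems(3)[of j \<mu>] j by simp
    finally have "(- 16 * of_nat (Suc n - j)) * phi n j \<mu> q = 0" .
    moreover have "(- 16 * of_nat (Suc n - j) :: complex) \<noteq> 0"
      using j(2) by (simp only: mult_eq_0_iff neg_equal_0_iff_equal of_nat_eq_0_iff) simp
    ultimately show ?thesis by (metis mult_eq_0_iff)
  qed
  ultimately have "q \<in> J_odd (Suc n)" using Suc.IH[OF qJ] by blast
  then show ?case unfolding pe using sz gamma_mult_J_odd by (simp add: J_odd_add)
qed

lemma phi_Suc: "j \<le> m \<Longrightarrow> phi (Suc m) j \<mu> p = phi m j \<mu> (Der p)"
  unfolding phi_def by (simp add: Suc_diff_le funpow_Suc_right del: funpow.simps)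

lemma phi0_Suc: "phi0 (Suc m) p = phi0 m (Der p)"
  unfolding phi0_def by (simp add: funpow_Suc_right del: funpow.simps)

lemma zeta_int_Suc_double:
  "zeta_int (2 * int (Suc m)) = zeta_int (2 * int m + 2)" "zeta_int (2 * int (Suc m) - 1) = zeta_int (2 * int m + 1)"
proof -
  have "2 * int (Suc m) = 2 * int m + 2" "2 * int (Suc m) - 1 = 2 * int m + 1" by simp_all
  then show "zeta_int (2 * int (Suc m)) = zeta_int (2 * int m + 2)"
    "zeta_int (2 * int (Suc m) - 1) = zeta_int (2 * int m + 1)" by (simp_all only:)
qed

lemma phi_zeta_Suc:
  assumes "j \<le> m"
  shows "phi (Suc m) j \<mu> (zeta_int (2 * int (Suc m) - 1)) = of_int (2 * int m + 1) * phi m j \<mu> (zeta_int (2 * int m))"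
    and "1 \<le> j \<Longrightarrow> poly (quad j) \<mu> = 0 \<Longrightarrow> phi (Suc m) j \<mu> (zeta_int (2 * int (Suc m))) =
      - (of_int (2 * int m + 2) * of_int (16 * (2 * int m) * (2 * int m + 1))) * phi m j \<mu> (zeta_int (2 * int m - 1))"
proof -
  show "phi (Suc m) j \<mu> (zeta_int (2 * int (Suc m) - 1)) = of_int (2 * int m + 1) * phi m j \<mu> (zeta_int (2 * int m))"
    unfolding zeta_int_Suc_double phi_Suc[OF assms] Der_zeta_odd phi_of_int_mult ..
  assume "1 \<le> j" "poly (quad j) \<mu> = 0"
  then have "phi m j \<mu> (zeta_int (2 * int m + 1)) = 0"
    using phi_J_odd_Suc[OF zeta_in_J_odd_Suc(1)] assms by blast
  then show "phi (Suc m) j \<mu> (zeta_int (2 * int (Suc m))) =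
      - (of_int (2 * int m + 2) * of_int (16 * (2 * int m) * (2 * int m + 1))) * phi m j \<mu> (zeta_int (2 * int m - 1))"
    unfolding zeta_int_Suc_double phi_Suc[OF assms] Der_zeta_even phi_of_int_mult phi_diff by simp
qed

lemma phi0_zeta_Suc:
  "phi0 (Suc m) (zeta_int (2 * int (Suc m) - 1)) = of_int (2 * int m + 1) * phi0 m (zeta_int (2 * int m))"
  "phi0 (Suc m) (zeta_int (2 * int (Suc m))) =
    - (of_int (2 * int m + 2) * of_int (16 * (2 * int m) * (2 * int m + 1))) * phi0 m (zeta_int (2 * int m - 1))"
proof -
  show "phi0 (Suc m) (zeta_int (2 * int (Suc m) - 1)) = of_int (2 * int m + 1) * phi0 m (zeta_int (2 * int m))"
    unfolding zeta_int_Suc_double phi0_Suc Der_zeta_odd phi0_of_int_mult ..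
  have "phi0 m (zeta_int (2 * int m + 1)) = 0" using phi0_J_odd_Suc[OF zeta_in_J_odd_Suc(1)] .
  then show "phi0 (Suc m) (zeta_int (2 * int (Suc m))) =
    - (of_int (2 * int m + 2) * of_int (16 * (2 * int m) * (2 * int m + 1))) * phi0 m (zeta_int (2 * int m - 1))"
    unfolding zeta_int_Suc_double phi0_Suc Der_zeta_even phi0_of_int_mult phi0_diff by simp
qed

lemma phi_zeta_ne_0:
  assumes "1 \<le> j" "poly (quad j) \<mu> = 0"
  shows "phi (j + d) j \<mu> (zeta_int (2 * int (j + d))) \<noteq> 0 \<and> phi (j + d) j \<mu> (zeta_int (2 * int (j + d) - 1)) \<noteq> 0"
proof (induction d)
  case 0
  obtain i where i: "j = Suc i" using assms(1) by (cases j) auto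
  have nz: "zeta0 j \<noteq> 0" using zeta0_ne_0[OF assms(1)] .
  have "gamma0 (zeta_int (2 * int j)) = zeta0 j * [:0, 1:]"
    unfolding i zeta_int_Suc_double zeta0_Suc gamma0_zeta_2n2 by (simp only: mult.commute)
  then have "gamma0 (zeta_int (2 * int j)) div zeta0 j = [:0, 1:]"
    by (simp only: nonzero_mult_div_cancel_left[OF nz])
  moreover have "gamma0 (zeta_int (2 * int j - 1)) div zeta0 j = 1"
    using nz by (simp add: zeta0_def[symmetric])
  ultimately show ?case using quad_root_ne_0[OF assms] unfolding phi_def psi_def by simp
next
  case (Suc d)
  have jm: "j \<le> j + d" by simp
  have c: "(of_int (2 * int (j + d) + 1) :: complex) \<noteq> 0" "(of_int (2 * int (j + d) + 2) :: complex) \<noteq> 0"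
    by (subst of_int_eq_0_iff; presburger)+
  have c': "(of_int (16 * (2 * int (j + d)) * (2 * int (j + d) + 1)) :: complex) \<noteq> 0"
    using assms(1) by (subst of_int_eq_0_iff) simp
  have "phi (Suc (j + d)) j \<mu> (zeta_int (2 * int (Suc (j + d)) - 1)) \<noteq> 0"
    unfolding phi_zeta_Suc(1)[OF jm] using Suc.IH c(1) by simp
  moreover have "phi (Suc (j + d)) j \<mu> (zeta_int (2 * int (Suc (j + d)))) \<noteq> 0"
    unfolding phi_zeta_Suc(2)[OF jm assms] using Suc.IH c(2) c' by simp
  ultimately show ?case by simp
qed

lemma phi0_zeta:
  "(even m \<longrightarrow> phi0 m (zeta_int (2 * int m)) \<noteq> 0 \<and> phi0 m (zeta_int (2 * int m - 1)) = 0)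
   \<and> (odd m \<longrightarrow> phi0 m (zeta_int (2 * int m)) = 0 \<and> phi0 m (zeta_int (2 * int m - 1)) \<noteq> 0)"
proof (induction m)
  case (Suc m)
  have "(of_int (2 * int m + 1) :: complex) \<noteq> 0" "(of_int (2 * int m + 2) :: complex) \<noteq> 0"
    by (subst of_int_eq_0_iff; presburger)+
  moreover have "(of_int (16 * (2 * int m) * (2 * int m + 1)) :: complex) \<noteq> 0" if "odd m"
    using that by (subst of_int_eq_0_iff) (cases m; simp)
  ultimately show ?case using Suc.IH unfolding phi0_zeta_Suc by (cases "even m") simp_all
qed (simp add: phi0_def)

lemma phi0_gamma_pow: "phi0 m (gamma ^ m) = (- 16) ^ m * fact m"
proof (induction m)
  case (Suc m)
  show ?case unfolding power_Suc phi0_gamma_mult Suc by (simp add: algebra_simps)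
qed (simp add: phi0_def)

lemma phi_gamma_pow: "1 \<le> j \<Longrightarrow> j \<le> m \<Longrightarrow> phi m j \<mu> (gamma ^ m) = 0"
proof (induction m arbitrary: j)
  case (Suc m)
  show ?case
  proof (cases "j = Suc m")
    case False
    then have "j \<le> m" using Suc.prems by simp
    then show ?thesis unfolding power_Suc phi_gamma_mult[OF \<open>j \<le> m\<close>] using Suc.IH[OF Suc.prems(1)] by simp
  qed (simp add: phi_def psi_gamma_mult)
qed simp

section \<open>The relation between zeta_(2n-1), zeta_2n and gamma^n\<close>

lemma poly_interpolation:
  fixes v :: "'a::field \<Rightarrow> 'a"
  assumes "finite S"
  shows "\<exists>t. \<forall>s\<in>S. poly t s = v s"
  using assms
proof (induction S rule: finite_induct)
  case (insert x S)
  obtain t0 where t0: "\<forall>s\<in>S. poly t0 s = v s" using insert.IH by blast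
  define w where "w = (\<Prod>s\<in>S. [:- s, 1:])"
  have "poly w s = 0" if "s \<in> S" for s
    unfolding w_def poly_prod using insert.hyps(1) that by (auto intro: prod_zero)
  moreover have "poly w x \<noteq> 0" unfolding w_def poly_prod using insert.hyps by auto
  ultimately have "\<forall>s\<in>insert x S. poly (t0 + smult ((v x - poly t0 x) / poly w x) w) s = v s"
    using t0 by auto
  then show ?case by blast
qed simp

text \<open>The roots of the \<open>quad j\<close> are nonzero and pairwise distinct, so a single polynomial can
  interpolate prescribed ratios at all of them while vanishing at 0.\<close>

lemma quad_roots_ratio_interpolation:
  fixes X Y :: "nat \<Rightarrow> complex \<Rightarrow> complex"
  assumes "\<And>j \<mu>. 1 \<le> j \<Longrightarrow> j \<le> n \<Longrightarrow> poly (quad j) \<mu> = 0 \<Longrightarrow> X j \<mu> \<noteq> 0"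
  shows "\<exists>t. poly t 0 = 0 \<and> (\<forall>j \<mu>. 1 \<le> j \<and> j \<le> n \<and> poly (quad j) \<mu> = 0 \<longrightarrow> poly t \<mu> * X j \<mu> = Y j \<mu>)"
proof -
  define R where "R = {\<mu>. \<exists>j. 1 \<le> j \<and> j \<le> n \<and> poly (quad j) \<mu> = 0}"
  define index where "index \<mu> = (SOME j. 1 \<le> j \<and> j \<le> n \<and> poly (quad j) \<mu> = 0)" for \<mu>
  define v where "v \<mu> = (if \<mu> = 0 then 0 else Y (index \<mu>) \<mu> / X (index \<mu>) \<mu>)" for \<mu>
  obtain t where t: "\<forall>s\<in>insert 0 R. poly t s = v s"
    using poly_interpolation[of "insert 0 R" v] finite_quad_roots unfolding R_def by auto
  have "poly t \<mu> * X j \<mu> = Y j \<mu>" if j: "1 \<le> j" "j \<le> n" "poly (quad j) \<mu> = 0" for j \<mu>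
  proof -
    have "1 \<le> index \<mu> \<and> index \<mu> \<le> n \<and> poly (quad (index \<mu>)) \<mu> = 0"
      unfolding index_def by (rule someI[where x = j]) (use j in simp)
    then have "index \<mu> = j" using quad_root_unique j by blast
    moreover have "\<mu> \<in> R" "\<mu> \<noteq> 0" using j quad_root_ne_0[OF j(1,3)] by (auto simp: R_def)
    ultimately show ?thesis using t assms[OF j] by (simp add: v_def)
  qed
  moreover have "poly t 0 = 0" using t by (simp add: v_def)
  ultimately show ?thesis by blast
qed

text \<open>The multiple of \<open>gamma\<^sup>n\<close> repairs \<open>phi0 n\<close>, which is nonzero on \<open>zeta\<^sub>2\<^sub>n\<^sub>-\<^sub>1\<close> only for odd \<open>n\<close>.\<close>

lemma zeta_relation:
  assumes "n \<ge> 1"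
  obtains t c where "zeta_int (2 * int n - 1) - alpha_poly t * zeta_int (2 * int n) - cst c * gamma ^ n \<in> J_odd (Suc n)"
    and "even n \<Longrightarrow> c = 0"
proof -
  have X0: "phi n j \<mu> (zeta_int (2 * int n)) \<noteq> 0" if "1 \<le> j" "j \<le> n" "poly (quad j) \<mu> = 0" for j \<mu>
    using phi_zeta_ne_0[of j \<mu> "n - j"] that by simp
  obtain t where t0: "poly t 0 = 0" and t: "\<And>j \<mu>. 1 \<le> j \<Longrightarrow> j \<le> n \<Longrightarrow> poly (quad j) \<mu> = 0 \<Longrightarrow>
      poly t \<mu> * phi n j \<mu> (zeta_int (2 * int n)) = phi n j \<mu> (zeta_int (2 * int n - 1))"
    using quad_roots_ratio_interpolation[of n "\<lambda>j \<mu>. phi n j \<mu> (zeta_int (2 * int n))"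
        "\<lambda>j \<mu>. phi n j \<mu> (zeta_int (2 * int n - 1))"] X0 by blast
  define c where "c = (if even n then 0 else phi0 n (zeta_int (2 * int n - 1)) / phi0 n (gamma ^ n))"
  define q where "q = zeta_int (2 * int n - 1) - alpha_poly t * zeta_int (2 * int n) - cst c * gamma ^ n"
  have qJ: "q \<in> J_odd n" unfolding q_def using zeta_in_J_odd gamma_pow_in_J_odd by (simp add: J_odd_diff J_odd_mult)
  have "phi0 n q = phi0 n (zeta_int (2 * int n - 1)) - poly t 0 * phi0 n (zeta_int (2 * int n))
      - c * phi0 n (gamma ^ n)"
    unfolding q_def phi0_diff phi0_cst_mult phi0_mult[OF zeta_in_J_odd(2)] by simp
  also have "\<dots> = 0" using phi0_zeta[of n] t0 phi0_gamma_pow[of n] by (auto simp: c_def)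
  finally have "phi0 n q = 0" .
  moreover have "phi n j \<mu> q = 0" if j: "1 \<le> j" "j \<le> n" "poly (quad j) \<mu> = 0" for j \<mu>
    unfolding q_def phi_diff phi_cst_mult phi_mult[OF zeta_in_J_odd(2) j] using t[OF j] phi_gamma_pow[OF j(1,2)]
    by simp
  ultimately have "q \<in> J_odd (Suc n)" using J_odd_Suc_if_functionals_vanish[OF qJ] by blast
  then show thesis using that unfolding q_def c_def by simp
qed

section \<open>The ideals J_2n\<close>

definition J_even :: "nat \<Rightarrow> bpoly set" where
  "J_even n = gen_ideal {zeta_int (2 * int n), zeta_int (2 * int n + 1), zeta_int (2 * int n + 2)}"

lemma is_ideal_J_even: "is_ideal (J_even n)"
  unfolding J_even_def by (rule is_ideal_gen_ideal)

lemma zeta_in_J_even: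
  "zeta_int (2 * int n) \<in> J_even n" "zeta_int (2 * int n + 1) \<in> J_even n" "zeta_int (2 * int n + 2) \<in> J_even n"
  unfolding J_even_def by (auto intro: gen_ideal_mem)

lemma J_even_subset_J_odd: "J_even n \<subseteq> J_odd n"
  unfolding J_even_def using zeta_in_J_odd by (intro gen_ideal_least is_ideal_J_odd) auto

lemma J_odd_Suc_subset_J_even: "J_odd (Suc n) \<subseteq> J_even n"
proof -
  note I = is_idealD[OF is_ideal_J_even]
  have "zeta_int (2 * int n + 3) \<in> J_even n"
    unfolding zeta_rec_2n3 using zeta_in_J_even by (intro I(2) I(3)) (simp add: mult.assoc I(3))
  then show ?thesis
    unfolding J_odd_Suc using zeta_in_J_even by (intro gen_ideal_least is_ideal_J_even) auto
qed

lemma J_even_decomp: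
  assumes "x \<in> J_even n"
  obtains a y where "y \<in> J_odd (Suc n)" "x = y + a * zeta_int (2 * int n)"
proof -
  have "\<exists>a y. y \<in> J_odd (Suc n) \<and> x = y + a * zeta_int (2 * int n)"
    using assms unfolding J_even_def
  proof (induction rule: gen_ideal_induct)
    case zero show ?case using J_odd_zero by (intro exI[of _ 0]) auto
  next
    case (add x y)
    then obtain a r b s where "r \<in> J_odd (Suc n)" "x = r + a * zeta_int (2 * int n)"
      "s \<in> J_odd (Suc n)" "y = s + b * zeta_int (2 * int n)" by blast
    then show ?case by (intro exI[of _ "a + b"] exI[of _ "r + s"]) (simp add: J_odd_add algebra_simps)
  next
    case (mult c x)
    then obtain a r where "r \<in> J_odd (Suc n)" "x = r + a * zeta_int (2 * int n)" by blast
    then show ?case by (intro exI[of _ "c * a"] exI[of _ "c * r"]) (simp add: J_odd_mult algebra_simps)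
  next
    case (gen s)
    then consider "s = zeta_int (2 * int n)" | "s \<in> J_odd (Suc n)"
      using zeta_in_J_odd_Suc(1,2) by blast
    then show ?case
    proof cases
      case 1 then show ?thesis using J_odd_zero by (intro exI[of _ 1] exI[of _ 0]) simp
    next
      case 2 then show ?thesis by (intro exI[of _ 0] exI[of _ s]) simp
    qed
  qed
  then show thesis using that by blast
qed

lemma zeta_mod_J_even:
  assumes "n \<ge> 1"
  obtains c where "zeta_int (2 * int n - 1) - cst c * gamma ^ n \<in> J_even n" and "even n \<Longrightarrow> c = 0"
proof -
  obtain t c where tc: "zeta_int (2 * int n - 1) - alpha_poly t * zeta_int (2 * int n) - cst c * gamma ^ n \<in> J_odd (Suc n)"
    "even n \<Longrightarrow> c = 0"
    using zeta_relation[OF assms] by blast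
  have "zeta_int (2 * int n - 1) - cst c * gamma ^ n
      = (zeta_int (2 * int n - 1) - alpha_poly t * zeta_int (2 * int n) - cst c * gamma ^ n)
        + alpha_poly t * zeta_int (2 * int n)"
    by simp
  also have "\<dots> \<in> J_even n"
    using tc(1) J_odd_Suc_subset_J_even zeta_in_J_even(1)
    by (intro is_idealD(2,3)[OF is_ideal_J_even]) auto
  finally show thesis using that tc(2) by blast
qed

lemma J_even_eq_J_odd:
  assumes "n \<ge> 1" "even n" shows "J_even n = J_odd n"
proof
  obtain c where "zeta_int (2 * int n - 1) - cst c * gamma ^ n \<in> J_even n" "c = 0"
    using zeta_mod_J_even[OF assms(1)] assms(2) by metis
  then have "zeta_int (2 * int n - 1) \<in> J_even n" by simp
  then show "J_odd n \<subseteq> J_even n"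
    unfolding J_odd_def using zeta_in_J_even by (intro gen_ideal_least is_ideal_J_even) auto
qed (rule J_even_subset_J_odd)

text \<open>For odd \<open>n\<close>, \<open>phi0 n\<close> vanishes on \<open>J_even n\<close> but not on \<open>gamma\<^sup>n\<close>.\<close>

lemma gamma_pow_notin_J_even:
  assumes "odd n" shows "gamma ^ n \<notin> J_even n"
proof
  assume "gamma ^ n \<in> J_even n"
  then obtain a y where y: "y \<in> J_odd (Suc n)" "gamma ^ n = y + a * zeta_int (2 * int n)"
    by (rule J_even_decomp)
  have "phi0 n (gamma ^ n) = phi0 n y + phi0 n (a * zeta_int (2 * int n))"
    unfolding y(2) by (rule phi0_add)
  also have "\<dots> = 0"
    using phi0_J_odd_Suc[OF y(1)] phi0_mult[OF zeta_in_J_odd(2)] phi0_zeta[of n] assms by simp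
  finally show False unfolding phi0_gamma_pow by simp
qed

lemma J_odd_eq_gen_ideal_J_even:
  assumes "n \<ge> 1" shows "J_odd n = gen_ideal (insert (gamma ^ n) (J_even n))"
proof
  obtain c where c: "zeta_int (2 * int n - 1) - cst c * gamma ^ n \<in> J_even n"
    using zeta_mod_J_even[OF assms] by blast
  note I = is_idealD[OF is_ideal_gen_ideal[of "insert (gamma ^ n) (J_even n)"]]
  have "zeta_int (2 * int n - 1) = (zeta_int (2 * int n - 1) - cst c * gamma ^ n) + cst c * gamma ^ n"
    by simp
  also have "\<dots> \<in> gen_ideal (insert (gamma ^ n) (J_even n))"
    using c by (intro I(2) I(3) gen_ideal_mem) auto
  finally show "J_odd n \<subseteq> gen_ideal (insert (gamma ^ n) (J_even n))"
    unfolding J_odd_def using zeta_in_J_even by (intro gen_ideal_least is_ideal_gen_ideal) (auto intro: gen_ideal_mem)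
  show "gen_ideal (insert (gamma ^ n) (J_even n)) \<subseteq> J_odd n"
    using gamma_pow_in_J_odd J_even_subset_J_odd by (intro gen_ideal_least is_ideal_J_odd) auto
qed

text \<open>Modulo \<open>J_even n\<close>, multiplication by \<open>a\<close> acts on \<open>gamma\<^sup>n\<close> as multiplication by \<open>a(0, 0)\<close>,
  since \<open>alpha gamma\<^sup>n\<close> and \<open>gamma\<^sup>n\<^sup>+\<^sup>1\<close> lie in \<open>J_odd (Suc n) \<subseteq> J_even n\<close>.\<close>

lemma mult_gamma_pow_mod_J_even:
  assumes "n \<ge> 1"
  shows "a * gamma ^ n - cst (poly (gamma0 a) 0) * gamma ^ n \<in> J_even n"
proof -
  note I = is_idealD[OF is_ideal_J_even]
  obtain k where k: "n = Suc k" using assms by (cases n) auto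
  have "gamma ^ k * zeta_int (2 * int 1 - 1) \<in> J_odd n" using gamma_pow_zeta_in_J_odd[of k 1] k by simp
  then have "gamma * (gamma ^ k * alpha) \<in> J_odd (Suc n)" by (simp add: gamma_mult_J_odd)
  then have agn: "alpha * gamma ^ n \<in> J_even n" using J_odd_Suc_subset_J_even k by (auto simp: algebra_simps)
  have ggn: "gamma * gamma ^ n \<in> J_even n"
    using gamma_mult_J_odd[OF gamma_pow_in_J_odd] J_odd_Suc_subset_J_even by auto
  obtain e where e: "gamma0 a - [:poly (gamma0 a) 0:] = [:0, 1:] * e"
    using poly_eq_0_iff_dvd[of "gamma0 a - [:poly (gamma0 a) 0:]" 0] by (auto elim: dvdE)
  have "alpha_poly (gamma0 a) = cst (poly (gamma0 a) 0) + alpha * alpha_poly e"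
  proof -
    have "gamma0 a = pCons (poly (gamma0 a) 0) e" using e by (simp add: algebra_simps)
    then show ?thesis by (metis alpha_poly_pCons)
  qed
  then have "a * gamma ^ n - cst (poly (gamma0 a) 0) * gamma ^ n
      = alpha_poly e * (alpha * gamma ^ n) + gamma_quot a * (gamma * gamma ^ n)"
    by (subst gamma0_decomp[of a]) (simp add: algebra_simps)
  also have "\<dots> \<in> J_even n" by (rule I(2)[OF I(3)[OF agn] I(3)[OF ggn]])
  finally show ?thesis .
qed

lemma J_odd_mod_J_even:
  assumes "n \<ge> 1" "x \<in> J_odd n"
  obtains c where "x - cst c * gamma ^ n \<in> J_even n"
proof -
  note I = is_idealD[OF is_ideal_J_even]
  have "\<exists>c. x - cst c * gamma ^ n \<in> J_even n"
    using assms(2) unfolding J_odd_eq_gen_ideal_J_even[OF assms(1)]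
  proof (induction rule: gen_ideal_induct)
    case zero show ?case using I(1) by (intro exI[of _ 0]) simp
  next
    case (add x y)
    then obtain c d where "x - cst c * gamma ^ n \<in> J_even n" "y - cst d * gamma ^ n \<in> J_even n" by blast
    then have "(x - cst c * gamma ^ n) + (y - cst d * gamma ^ n) \<in> J_even n" by (rule I(2))
    then show ?case by (intro exI[of _ "c + d"]) (simp add: cst_add algebra_simps)
  next
    case (mult a x)
    then obtain c where "x - cst c * gamma ^ n \<in> J_even n" by blast
    then have "a * (x - cst c * gamma ^ n)
        + cst c * (a * gamma ^ n - cst (poly (gamma0 a) 0) * gamma ^ n) \<in> J_even n"
      using mult_gamma_pow_mod_J_even[OF assms(1)] by (intro I(2) I(3))
    then show ?case
      by (intro exI[of _ "c * poly (gamma0 a) 0"]) (simp add: algebra_simps cst_mult_cst[symmetric])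
  next
    case (gen y)
    then show ?case
    proof
      assume "y = gamma ^ n" then show ?case using I(1) by (intro exI[of _ 1]) simp
    qed (intro exI[of _ 0]; simp)
  qed
  then show thesis using that by blast
qed

lemma basis_mod_J_even:
  assumes "odd n"
  shows "basis_mod (J_even n) (insert (gamma ^ n) (mon ` std_exps n))"
proof -
  have n: "n \<ge> 1" using assms by (cases n) auto
  show ?thesis
  proof (rule basis_mod_insert[OF basis_mod_J_odd is_ideal_J_odd is_ideal_J_even J_even_subset_J_odd
        gamma_pow_in_J_odd gamma_pow_notin_J_even[OF assms]])
    fix x assume "x \<in> J_odd n"
    then obtain c where "x - cst c * gamma ^ n \<in> J_even n" by (rule J_odd_mod_J_even[OF n])
    then show "\<exists>c. x - cst c * gamma ^ n \<in> J_even n" ..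
  qed
qed

lemma qdeg_J_odd: "qdeg (J_odd n) = n^2"
  using qdeg_eq_card[OF basis_mod_J_odd is_ideal_J_odd] card_mon_std_exps by simp

lemma qdeg_J_even: "odd n \<Longrightarrow> qdeg (J_even n) = n^2 + 1"
  using qdeg_eq_card[OF basis_mod_J_even is_ideal_J_even] card_mon_std_exps gamma_pow_notin_mon_std_exps
    finite_std_exps by simp

section \<open>Groebner basis of J_(2n-1)\<close>

lemma lead_monomials_groebner_set:
  "{mon (lexp p) | p. p \<in> insert (gamma ^ n) ((\<lambda>k. gamma ^ k * zeta (2 * n - 1 - 2 * k)) ` {0..n - 1}) \<and> p \<noteq> 0}
    = insert (gamma ^ n) ((\<lambda>i. gamma ^ i * alpha ^ (2 * n - 1 - 2 * i)) ` {0..n - 1})"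
    (is "{mon (lexp p) | p. p \<in> ?G \<and> p \<noteq> 0} = _")
proof -
  have "gamma ^ k * zeta m \<noteq> 0" for k m using zeta_monic[of m] by auto
  then have "p \<noteq> 0" if "p \<in> ?G" for p using that by auto
  then have "{mon (lexp p) | p. p \<in> ?G \<and> p \<noteq> 0} = (\<lambda>p. mon (lexp p)) ` ?G" by blast
  moreover have "mon (lexp (gamma ^ n)) = gamma ^ n" using mon_lexp_gamma_pow_zeta[of n 0] by simp
  ultimately show ?thesis by (simp add: image_image mon_lexp_gamma_pow_zeta)
qed

lemma groebner_set_subset_J_odd:
  "insert (gamma ^ n) ((\<lambda>k. gamma ^ k * zeta (2 * n - 1 - 2 * k)) ` {0..n - 1}) \<subseteq> J_odd n"
proof -
  have "gamma ^ k * zeta (2 * n - 1 - 2 * k) \<in> J_odd n" if "k \<le> n - 1" "n \<ge> 1" for k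
  proof -
    have "int (2 * n - 1 - 2 * k) = 2 * int (n - k) - 1" using that by auto
    then have "zeta (2 * n - 1 - 2 * k) = zeta_int (2 * int (n - k) - 1)"
      using zeta_int_of_nat[of "2 * n - 1 - 2 * k"] by simp
    then show ?thesis using gamma_pow_zeta_in_J_odd[of k "n - k"] that by simp
  qed
  then show ?thesis using gamma_pow_in_J_odd[of n] by (cases "n = 0") auto
qed

lemma initial_ideal_J_odd:
  assumes "n \<ge> 1"
  shows "initial_ideal (J_odd n) = gen_ideal (insert (gamma ^ n) ((\<lambda>i. gamma ^ i * alpha ^ (2 * n - 1 - 2 * i)) ` {0..n - 1}))"
    (is "_ = gen_ideal ?M")
proof
  show "gen_ideal ?M \<subseteq> initial_ideal (J_odd n)"
    unfolding initial_ideal_def lead_monomials_groebner_set[symmetric]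
    using groebner_set_subset_J_odd by (intro gen_ideal_mono) blast
next
  have mult_mem: "x * m \<in> gen_ideal ?M" if "m \<in> ?M" for x m
    by (rule is_idealD(3)[OF is_ideal_gen_ideal gen_ideal_mem[OF that]])
  have "mon (lexp p) \<in> gen_ideal ?M" if p: "p \<in> J_odd n" "p \<noteq> 0" for p
  proof -
    define d e where "d = degree p" and "e = degree (lead_coeff p)"
    have me: "mon (lexp p) = gamma ^ e * alpha ^ d" by (simp add: lexp_def mon_def d_def e_def mult.commute)
    from lead_term_J_odd[OF p] consider "n \<le> e" | k where "k < n" "2 * n - 1 - 2 * k \<le> d" "k \<le> e"
      unfolding d_def e_def by fastforce
    then show ?thesis
    proof cases
      case 1
      then have "gamma ^ e = gamma ^ (e - n) * gamma ^ n" by (metis le_add_diff_inverse2 power_add)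
      then have "mon (lexp p) = (gamma ^ (e - n) * alpha ^ d) * gamma ^ n"
        unfolding me by (simp only: mult.assoc mult.commute[of "gamma ^ n" "alpha ^ d"])
      then show ?thesis using mult_mem[of "gamma ^ n"] by simp
    next
      case 2
      let ?m = "2 * n - 1 - 2 * k"
      from 2 have "gamma ^ e = gamma ^ (e - k) * gamma ^ k" "alpha ^ d = alpha ^ (d - ?m) * alpha ^ ?m"
        by (metis le_add_diff_inverse2 power_add)+
      then have "mon (lexp p) = (gamma ^ (e - k) * alpha ^ (d - ?m)) * (gamma ^ k * alpha ^ ?m)"
        unfolding me by (simp only: mult.assoc mult.left_commute[of "gamma ^ k" "alpha ^ (d - ?m)"])
      moreover have "gamma ^ k * alpha ^ ?m \<in> ?M"
        using 2(1) by (intro insertI2 image_eqI[where x = k]) simp_all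
      ultimately show ?thesis using mult_mem by simp
    qed
  qed
  then show "initial_ideal (J_odd n) \<subseteq> gen_ideal ?M"
    unfolding initial_ideal_def by (intro gen_ideal_least is_ideal_gen_ideal) blast
qed

lemma Jp_odd: "n \<ge> 1 \<Longrightarrow> Jp (2 * n - 1) = J_odd n"
  unfolding Jp_def J_odd_def zeta_int_of_nat[symmetric] by (simp add: of_nat_diff algebra_simps)

lemma Jp_even: "Jp (2 * n) = J_even n"
  unfolding Jp_def J_even_def zeta_int_of_nat[symmetric] by (simp add: algebra_simps)

lemma mon_std_exps:
  "{gamma ^ i * alpha ^ j | i j. i \<le> n - 1 \<and> j < 2 * n - 1 - 2 * i} = mon ` std_exps n"
proof (intro set_eqI iffI)
  fix x assume "x \<in> {gamma ^ i * alpha ^ j | i j. i \<le> n - 1 \<and> j < 2 * n - 1 - 2 * i}"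
  then obtain i j where x: "x = mon (j, i)" "i \<le> n - 1" "j < 2 * n - 1 - 2 * i"
    by (auto simp: mon_def mult.commute)
  then have "(j, i) \<in> std_exps n" by (auto simp: std_exps_def)
  then show "x \<in> mon ` std_exps n" using x(1) by (rule rev_image_eqI)
next
  fix x assume "x \<in> mon ` std_exps n"
  then obtain i j where "x = gamma ^ i * alpha ^ j" "i < n" "j + 2 * i + 1 < 2 * n"
    by (auto simp: std_exps_def mon_def mult.commute)
  then show "x \<in> {gamma ^ i * alpha ^ j | i j. i \<le> n - 1 \<and> j < 2 * n - 1 - 2 * i}"
    by (intro CollectI exI[of _ i] exI[of _ j]) auto
qed

theorem proposition5p11:
  fixes g :: nat
  assumes "odd g" and "g \<ge> 1"
  defines "G \<equiv> insert (gamma ^ ((g + 1) div 2))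
                  ((\<lambda>k. gamma ^ k * zeta (g - 2 * k)) ` {0..(g - 1) div 2})"
      and "B \<equiv> {gamma ^ i * alpha ^ j | i j. i \<le> (g - 1) div 2 \<and> j < g - 2 * i}"
  shows "is_groebner_basis G (Jp g)
    \<and> initial_ideal (Jp g) = gen_ideal (insert (gamma ^ ((g + 1) div 2))
                  ((\<lambda>i. gamma ^ i * alpha ^ (g - 2 * i)) ` {0..(g - 1) div 2}))
    \<and> basis_mod (Jp g) B
    \<and> card B = (g + 1)^2 div 4
    \<and> qdeg (Jp g) = (g + 1)^2 div 4
    \<and> ((g + 1) mod 4 = 0 \<longrightarrow> Jp (g + 1) = Jp g)
    \<and> ((g + 1) mod 4 = 2 \<longrightarrow>
           int (qdeg (Jp (g + 1))) - int (qdeg (Jp g)) = 1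
         \<and> Jp g = gen_ideal (insert (gamma ^ ((g + 1) div 2)) (Jp (g + 1)))
         \<and> basis_mod (Jp (g + 1)) (insert (gamma ^ ((g + 1) div 2)) B))"
proof -
  obtain m where g: "g = 2 * m + 1" using assms(1) by (rule oddE)
  define n where "n = Suc m"
  have n: "g = 2 * n - 1" "n \<ge> 1" "g + 1 = 2 * n" by (simp_all add: g n_def)
  have idx: "(g + 1) div 2 = n" "(g - 1) div 2 = n - 1" "(g + 1)^2 div 4 = n^2"
    by (simp_all add: g n_def power2_eq_square)
  have mods: "(g + 1) mod 4 = 0 \<longleftrightarrow> even n" "(g + 1) mod 4 = 2 \<longleftrightarrow> odd n"
    unfolding g n_def by presburger+
  have G: "G = insert (gamma ^ n) ((\<lambda>k. gamma ^ k * zeta (2 * n - 1 - 2 * k)) ` {0..n - 1})"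
    unfolding G_def idx(1,2) unfolding n(1) ..
  have M: "insert (gamma ^ ((g + 1) div 2)) ((\<lambda>i. gamma ^ i * alpha ^ (g - 2 * i)) ` {0..(g - 1) div 2})
      = insert (gamma ^ n) ((\<lambda>i. gamma ^ i * alpha ^ (2 * n - 1 - 2 * i)) ` {0..n - 1})"
    unfolding idx(1,2) unfolding n(1) ..
  have B: "B = mon ` std_exps n" unfolding B_def idx(2) unfolding n(1) by (rule mon_std_exps)
  have J: "Jp g = J_odd n" "Jp (g + 1) = J_even n" unfolding n(3) using Jp_odd[OF n(2)] n(1) Jp_even by simp_all
  show ?thesis
    unfolding is_groebner_basis_def M unfolding G B J idx(1,3) mods
    using groebner_set_subset_J_odd[of n] initial_ideal_J_odd[OF n(2)] lead_monomials_groebner_set[of n]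
      basis_mod_J_odd[of n] card_mon_std_exps[of n] qdeg_J_odd[of n] J_even_eq_J_odd[OF n(2)]
      qdeg_J_even[of n] basis_mod_J_even[of n]
    by (simp add: J_odd_eq_gen_ideal_J_even[OF n(2), symmetric])
qed

end
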